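(* Under Assumptions 1–2, assume $r_\ell<\min\{m_\ell,n_\ell\}$ for all $\ell$. If the hyperparameters satisfy $0<\beta_1\le1$, $\tau\ge\frac{64}{3\beta_1\underline\delta}$, and $0<\eta\le\min\Big\{\frac1{4L},\sqrt{\frac{3\underline\delta\beta_1^2}{80L^2}},\sqrt{\frac{3\underline\delta}{80\tau^2L^2}},\sqrt{\frac{3\beta_1}{16\tau L^2}}\Big\}$, then GaLore using deterministic gradients and MSGD with momentum projection satisfies, for every integer $K\ge1$, $\frac1{K\tau}\sum_{t=0}^{K\tau-1}\|\nabla f(x^{(t)})\|_2^2\le\frac{16\Delta}{\underline\delta\eta K\tau}.$
   Context: Parameters $x=(\mathrm{vec}(X_1)^\top,\dots,\mathrm{vec}(X_{N_L})^\top)^\top\in\mathbb{R}^d$, $X_\ell\in\mathbb{R}^{m_\ell\times n_\ell}$; $\nabla_\ell$ is the gradient w.r.t. $X_\ell$. Assumption 1: $\inf f>-\infty$. Assumption 2: $\nabla f$ is $L$-Lipschitz in $\|\cdot\|_2$. $\Delta=f(x^{(0)})-\inf f$, $\delta_\ell=r_\ell/\min\{m_\ell,n_\ell\}$, $\underline\delta=\min_\ell\delta_\ell$. Algorithm (deterministic GaLore with MSGD and momentum projection): $M_\ell^{(-1)}=0$. For $t\ge0$ and each $\ell$: $G_\ell^{(t)}=\nabla_\ell f(x^{(t)})$. If $t\equiv0\pmod\tau$, take an SVD $G_\ell^{(t)}=U\Sigma V^\top$ (singular values nonincreasing), $P_\ell^{(t)}=U[:,:r_\ell]$, $Q_\ell^{(t)}=V[:,:r_\ell]$;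 otherwise $P_\ell^{(t)}=P_\ell^{(t-1)}$, $Q_\ell^{(t)}=Q_\ell^{(t-1)}$. If $m_\ell\le n_\ell$: $M_\ell^{(t)}=(1-\beta_1)(P_\ell^{(t)})^\top P_\ell^{(t-1)}M_\ell^{(t-1)}+\beta_1(P_\ell^{(t)})^\top G_\ell^{(t)}$, $X_\ell^{(t+1)}=X_\ell^{(t)}-\eta P_\ell^{(t)}M_\ell^{(t)}$. If $m_\ell>n_\ell$: $M_\ell^{(t)}=(1-\beta_1)M_\ell^{(t-1)}(Q_\ell^{(t-1)})^\top Q_\ell^{(t)}+\beta_1G_\ell^{(t)}Q_\ell^{(t)}$, $X_\ell^{(t+1)}=X_\ell^{(t)}-\eta M_\ell^{(t)}(Q_\ell^{(t)})^\top$. *)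

theory Defs
  imports "HOL-Analysis.Analysis" "Jordan_Normal_Form.Matrix"
begin

definition is_svd :: "real mat \<Rightarrow> real mat \<Rightarrow> real mat \<Rightarrow> real mat \<Rightarrow> bool" where
  "is_svd G U S V \<longleftrightarrow>
     (let m = dim_row G; n = dim_col G in
        U \<in> carrier_mat m m \<and> V \<in> carrier_mat n n \<and> S \<in> carrier_mat m n \<and>
        transpose_mat U * U = 1\<^sub>m m \<and> transpose_mat V * V = 1\<^sub>m n \<and>
        (\<forall>i<m. \<forall>j<n. i \<noteq> j \<longrightarrow> S $$ (i,j) = 0) \<and>
        (\<forall>i<min m n. 0 \<le> S $$ (i,i)) \<and>
        (\<forall>i j. i \<le> j \<longrightarrow> j < min m n \<longrightarrow> S $$ (j,j) \<le> S $$ (i,i)) \<and>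
        G = U * S * transpose_mat V)"

definition first_cols :: "nat \<Rightarrow> real mat \<Rightarrow> real mat" where
  "first_cols r U = mat (dim_row U) r (\<lambda>(i,j). U $$ (i,j))"

text \<open>Block X_l of a parameter vector x, given the index map of the stacking.\<close>
definition block :: "(nat \<Rightarrow> nat \<Rightarrow> nat \<Rightarrow> 'd) \<Rightarrow> nat \<Rightarrow> nat \<Rightarrow> nat \<Rightarrow> real^'d \<Rightarrow> real mat" where
  "block ix m n l x = mat m n (\<lambda>(i,j). x $ ix l i j)"

end

theory Submission
  imports Defs
begin

text \<open>The GaLore iterates move along the lifted momentum \<open>mom t\<close>, which lies in the range of an
  orthogonal projection \<open>proj t\<close> that changes only every \<open>\<tau>\<close> steps. Smoothness gives the descent
  \<open>f (x (t+1)) \<le> f (x t) - \<eta>/2 (\<parallel>proj t g\<parallel>\<^sup>2 + (1 - 2 L \<eta>) \<parallel>mom t\<parallel>\<^sup>2 - \<parallel>e t\<parallel>\<^sup>2)\<close> with the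
  momentum error \<open>e t = mom t - proj t g\<close>. This error contracts by \<open>1 - \<beta>\<close> per step, is perturbed by
  the gradient drift \<open>\<parallel>g t - g (t+1)\<parallel> \<le> L \<eta> \<parallel>mom t\<parallel>\<close>, and can grow by \<open>\<parallel>g\<parallel>\<^sup>2\<close> at each of
  the few refreshes. At a refresh the truncated SVD keeps at least the fraction \<open>r/min(m,n)\<close> of
  \<open>\<parallel>g\<parallel>\<^sup>2\<close>, and within a period the gradient drifts by at most \<open>L \<eta> \<surd>\<tau>\<close> times the root of
  the momentum energy, so the projected gradients control \<open>\<delta> \<Sum> \<parallel>g\<parallel>\<^sup>2\<close>. The step-size
  conditions make all error and drift terms absorbable, leaving a decrease of \<open>\<delta> \<eta> \<parallel>g\<parallel>\<^sup>2/16\<close>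
  per step on average.\<close>

lemma lipschitz_gradient_upper_bound:
  fixes f :: "'a::real_inner \<Rightarrow> real" and grad :: "'a \<Rightarrow> 'a"
  assumes has_grad: "\<And>y. (f has_derivative (\<lambda>h. inner (grad y) h)) (at y)"
    and lipschitz: "\<And>y z. norm (grad y - grad z) \<le> L * norm (y - z)"
    and L: "0 \<le> L"
  shows "f y \<le> f x + inner (grad x) (y - x) + L * (norm (y - x))\<^sup>2"
proof -
  define \<phi> where "\<phi> = (\<lambda>s::real. f (x + s *\<^sub>R (y - x)))"
  have deriv: "(\<phi> has_real_derivative inner (grad (x + s *\<^sub>R (y - x))) (y - x)) (at s)" for s
  proof -
    have "((\<lambda>s. x + s *\<^sub>R (y - x)) has_derivative (\<lambda>h. h *\<^sub>R (y - x))) (at s)"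
      by (auto intro!: derivative_eq_intros)
    from has_derivative_compose[OF this has_grad]
    have "(\<phi> has_derivative (\<lambda>h. h * inner (grad (x + s *\<^sub>R (y - x))) (y - x))) (at s)"
      by (simp add: o_def \<phi>_def)
    then show ?thesis
      by (simp add: has_field_derivative_def mult_commute_abs)
  qed
  obtain z where z: "0 < z" "z < 1"
    and mvt: "\<phi> 1 - \<phi> 0 = inner (grad (x + z *\<^sub>R (y - x))) (y - x)"
    using MVT2[of 0 1 \<phi> "\<lambda>s. inner (grad (x + s *\<^sub>R (y - x))) (y - x)"] deriv by auto
  have "inner (grad (x + z *\<^sub>R (y - x))) (y - x) - inner (grad x) (y - x)
      = inner (grad (x + z *\<^sub>R (y - x)) - grad x) (y - x)" by (simp add: inner_diff_left)
  also have "\<dots> \<le> norm (grad (x + z *\<^sub>R (y - x)) - grad x) * norm (y - x)"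
    by (rule norm_cauchy_schwarz)
  also have "\<dots> \<le> (L * (z * norm (y - x))) * norm (y - x)"
    using lipschitz[of "x + z *\<^sub>R (y - x)" x] z by (intro mult_right_mono) auto
  also have "\<dots> \<le> L * (norm (y - x))\<^sup>2"
    using z L by (simp add: power2_eq_square mult_left_le_one_le mult_left_mono mult.assoc)
  finally show ?thesis using mvt unfolding \<phi>_def by simp
qed

lemma contracting_sum_bound:
  fixes e b :: "nat \<Rightarrow> real"
  assumes e0: "e 0 \<le> c" and e_nonneg: "\<And>t. 0 \<le> e t" and b_nonneg: "\<And>t. 0 \<le> b t"
    and contract: "\<And>t. e (Suc t) \<le> (1 - \<beta>) * e t + b t" and \<beta>: "0 < \<beta>" "\<beta> \<le> 1"
  shows "\<beta> * (\<Sum>t<T. e t) \<le> c + (\<Sum>t<T. b t)"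
proof -
  have partial: "\<beta> * (\<Sum>t<Suc T. e t) + (1 - \<beta>) * e T \<le> c + (\<Sum>t<T. b t)" for T
  proof (induction T)
    case 0
    then show ?case using e0 by (simp add: algebra_simps)
  next
    case (Suc T)
    have "\<beta> * (\<Sum>t<Suc (Suc T). e t) + (1 - \<beta>) * e (Suc T)
        = \<beta> * (\<Sum>t<Suc T. e t) + e (Suc T)" by (simp add: algebra_simps)
    also have "\<dots> \<le> \<beta> * (\<Sum>t<Suc T. e t) + (1 - \<beta>) * e T + b T" using contract[of T] by simp
    also have "\<dots> \<le> c + (\<Sum>t<Suc T. b t)" using Suc by simp
    finally show ?case .
  qed
  show ?thesis
  proof (cases T)
    case 0
    then show ?thesis using e0 e_nonneg[of 0] by simp
  next
    case (Suc T')
    have "\<beta> * (\<Sum>t<T. e t) \<le> c + (\<Sum>t<T'. b t)"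
      using partial[of T'] e_nonneg[of T'] \<beta> Suc by (smt (verit) mult_nonneg_nonneg)
    also have "\<dots> \<le> c + (\<Sum>t<T. b t)" using Suc b_nonneg by simp
    finally show ?thesis .
  qed
qed

lemma norm_sum_power2_le:
  fixes v :: "'i \<Rightarrow> 'a::real_normed_vector"
  shows "(norm (\<Sum>u\<in>I. v u))\<^sup>2 \<le> real (card I) * (\<Sum>u\<in>I. (norm (v u))\<^sup>2)"
proof -
  have "(norm (\<Sum>u\<in>I. v u))\<^sup>2 \<le> (\<Sum>u\<in>I. norm (v u))\<^sup>2"
    by (simp add: norm_sum power_mono)
  also have "\<dots> \<le> (\<Sum>u\<in>I. (norm (v u))\<^sup>2) * real (card I)"
    by (rule sum_squared_le_sum_of_squares)
  finally show ?thesis by (simp add: mult.commute)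
qed

lemma power2_le_of_le_add:
  fixes a b d c :: real
  assumes "0 \<le> a" "a \<le> b + d" "0 < c"
  shows "a\<^sup>2 \<le> (1 + c) * b\<^sup>2 + (1 + 1 / c) * d\<^sup>2"
proof -
  have "2 * b * d * c \<le> c\<^sup>2 * b\<^sup>2 + d\<^sup>2"
    using zero_le_power2[of "c * b - d"] by (simp add: power2_eq_square algebra_simps)
  then have cross: "2 * b * d \<le> c * b\<^sup>2 + d\<^sup>2 / c"
    using \<open>0 < c\<close> by (simp add: field_simps power2_eq_square)
  have "a\<^sup>2 \<le> (b + d)\<^sup>2" using assms by (simp add: power_mono)
  also have "\<dots> \<le> (1 + c) * b\<^sup>2 + (1 + 1 / c) * d\<^sup>2"
    using cross by (simp add: power2_sum algebra_simps)
  finally show ?thesis .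
qed

lemma damped_power2_add_le:
  fixes a b \<beta> :: real
  assumes "0 < \<beta>" "\<beta> \<le> 1"
  shows "(1 - \<beta>)\<^sup>2 * (a + b)\<^sup>2 \<le> (1 - \<beta>) * a\<^sup>2 + (1 - \<beta>)\<^sup>2 / \<beta> * b\<^sup>2"
proof -
  have "\<beta> * (1 - \<beta>) * a\<^sup>2 + (1 - \<beta>)\<^sup>2 * b\<^sup>2 - \<beta> * ((1 - \<beta>)\<^sup>2 * (a + b)\<^sup>2)
     = (1 - \<beta>) * (\<beta> * a - (1 - \<beta>) * b)\<^sup>2"
    unfolding power2_eq_square by (simp add: algebra_simps)
  moreover have "0 \<le> (1 - \<beta>) * (\<beta> * a - (1 - \<beta>) * b)\<^sup>2" using assms by simp
  ultimately have "\<beta> * ((1 - \<beta>)\<^sup>2 * (a + b)\<^sup>2) \<le> \<beta> * (1 - \<beta>) * a\<^sup>2 + (1 - \<beta>)\<^sup>2 * b\<^sup>2"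
    by linarith
  also have "\<dots> = \<beta> * ((1 - \<beta>) * a\<^sup>2 + (1 - \<beta>)\<^sup>2 / \<beta> * b\<^sup>2)"
    using assms by (simp add: distrib_left)
  finally have "\<beta> * ((1 - \<beta>)\<^sup>2 * (a + b)\<^sup>2) \<le> \<beta> * ((1 - \<beta>) * a\<^sup>2 + (1 - \<beta>)\<^sup>2 / \<beta> * b\<^sup>2)" .
  then show ?thesis using assms by simp
qed

definition period_sum :: "nat \<Rightarrow> (nat \<Rightarrow> 'b::comm_monoid_add) \<Rightarrow> nat \<Rightarrow> 'b" where
  "period_sum \<tau> F k = (\<Sum>u<\<tau>. F (k * \<tau> + u))"

lemma sum_lessThan_mult_eq_period_sums:
  "(\<Sum>t<K * \<tau>. F t) = (\<Sum>k<K. period_sum \<tau> F k)"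
proof -
  have "sum F {k * \<tau>..<k * \<tau> + \<tau>} = period_sum \<tau> F k" for k
    using sum.atLeastLessThan_shift_0[of F "k * \<tau>" "k * \<tau> + \<tau>"]
    by (simp add: period_sum_def atLeast0LessThan o_def)
  then show ?thesis using sum.nat_group[where g=F and k=\<tau> and n=K] by simp
qed

section \<open>Momentum descent in periodically refreshed subspaces\<close>

text \<open>GaLore on the whole parameter vector: \<open>proj t\<close> stands for the layerwise projections
  \<open>P (P\<^sup>T X)\<close> or \<open>X Q Q\<^sup>T\<close>, and \<open>mom t\<close> for the lifted momenta \<open>P M\<close> or \<open>M Q\<^sup>T\<close>.
  Working with the lifted momentum turns the momentum projection \<open>P (t+1)\<^sup>T P t\<close> into a plain
  application of \<open>proj (Suc t)\<close>.\<close>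

locale projected_momentum_descent =
  fixes f :: "'a::real_inner \<Rightarrow> real" and grad :: "'a \<Rightarrow> 'a" and L :: real
    and proj :: "nat \<Rightarrow> 'a \<Rightarrow> 'a" and mom x :: "nat \<Rightarrow> 'a"
    and \<beta> \<eta> \<delta> :: real and \<tau> :: nat
  assumes has_grad: "\<And>y. (f has_derivative (\<lambda>h. inner (grad y) h)) (at y)"
    and grad_lipschitz: "\<And>y z. norm (grad y - grad z) \<le> L * norm (y - z)"
    and L_nonneg: "0 \<le> L"
    and proj_adjoint: "\<And>t u v. inner (proj t u) v = inner u (proj t v)"
    and proj_idem: "\<And>t v. proj t (proj t v) = proj t v"
    and proj_linear: "\<And>t a b u v. proj t (a *\<^sub>R u + b *\<^sub>R v) = a *\<^sub>R proj t u + b *\<^sub>R proj t v"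
    and proj_keep: "\<And>t. Suc t mod \<tau> \<noteq> 0 \<Longrightarrow> proj (Suc t) = proj t"
    and proj_refresh: "\<And>t. t mod \<tau> = 0 \<Longrightarrow> \<delta> * (norm (grad (x t)))\<^sup>2 \<le> (norm (proj t (grad (x t))))\<^sup>2"
    and mom_0: "mom 0 = proj 0 (\<beta> *\<^sub>R grad (x 0))"
    and mom_Suc: "\<And>t. mom (Suc t) = proj (Suc t) ((1 - \<beta>) *\<^sub>R mom t + \<beta> *\<^sub>R grad (x (Suc t)))"
    and x_Suc: "\<And>t. x (Suc t) = x t - \<eta> *\<^sub>R mom t"
    and \<beta>: "0 < \<beta>" "\<beta> \<le> 1" and \<tau>: "1 \<le> \<tau>" and \<delta>: "0 < \<delta>" "\<delta> \<le> 1" and \<eta>: "0 < \<eta>"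
begin

abbreviation "g t \<equiv> grad (x t)"
abbreviation "pg t \<equiv> proj t (g t)"
abbreviation "err t \<equiv> mom t - pg t"
abbreviation "\<kappa> \<equiv> L\<^sup>2 * \<eta>\<^sup>2"

definition refresh_term :: "nat \<Rightarrow> real" where
  "refresh_term t = (if Suc t mod \<tau> = 0 then (norm (g t))\<^sup>2 else 0)"

lemma proj_diff: "proj t (u - v) = proj t u - proj t v"
  using proj_linear[of t 1 u "-1" v] by simp

lemma proj_scaleR: "proj t (a *\<^sub>R u) = a *\<^sub>R proj t u"
  using proj_linear[of t a u 0 u] by simp

lemma norm_proj_power2: "(norm (proj t v))\<^sup>2 = inner (proj t v) v"
  by (metis proj_adjoint proj_idem power2_norm_eq_inner)

lemma norm_proj_le: "norm (proj t v) \<le> norm v"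
proof (cases "proj t v = 0")
  case False
  have "norm (proj t v) * norm (proj t v) \<le> norm (proj t v) * norm v"
    using norm_proj_power2[of t v] norm_cauchy_schwarz[of "proj t v" v] by (simp add: power2_eq_square)
  then show ?thesis using False by simp
qed simp

lemma proj_mom: "proj t (mom t) = mom t"
  by (cases t) (simp_all add: mom_0 mom_Suc proj_idem)

lemma proj_err: "proj t (err t) = err t"
  by (simp add: proj_diff proj_mom proj_idem)

lemma descent_step:
  "f (x (Suc t)) \<le> f (x t) - \<eta> / 2 * ((norm (pg t))\<^sup>2 + (1 - 2 * L * \<eta>) * (norm (mom t))\<^sup>2 - (norm (err t))\<^sup>2)"
proof -
  have smooth: "f (x (Suc t)) \<le> f (x t) + inner (g t) (x (Suc t) - x t) + L * (norm (x (Suc t) - x t))\<^sup>2"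
    by (rule lipschitz_gradient_upper_bound[OF has_grad grad_lipschitz L_nonneg])
  text \<open>Since \<open>mom t\<close> lies in the range of \<open>proj t\<close>, only \<open>pg t\<close> sees the step; polarization
    then expresses the inner product through \<open>err t\<close>.\<close>
  have "inner (g t) (mom t) = inner (pg t) (mom t)"
    by (metis proj_mom proj_adjoint)
  also have "\<dots> = ((norm (mom t))\<^sup>2 + (norm (pg t))\<^sup>2 - (norm (err t))\<^sup>2) / 2"
    by (simp add: power2_norm_eq_inner inner_diff_left inner_diff_right inner_commute)
  finally have polar: "inner (g t) (mom t) = ((norm (mom t))\<^sup>2 + (norm (pg t))\<^sup>2 - (norm (err t))\<^sup>2) / 2" .
  have "(norm (x (Suc t) - x t))\<^sup>2 = \<eta>\<^sup>2 * (norm (mom t))\<^sup>2"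
    using \<eta> by (simp add: x_Suc power_mult_distrib)
  with smooth polar show ?thesis
    by (simp add: x_Suc field_simps power2_eq_square)
qed

lemma descent_sum:
  "f (x T) \<le> f (x 0) - \<eta> / 2 * (\<Sum>t<T. (norm (pg t))\<^sup>2 + (1 - 2 * L * \<eta>) * (norm (mom t))\<^sup>2 - (norm (err t))\<^sup>2)"
proof (induction T)
  case (Suc T)
  then show ?case using descent_step[of T] by (simp add: algebra_simps)
qed simp

lemma err_Suc: "err (Suc t) = (1 - \<beta>) *\<^sub>R proj (Suc t) (mom t - g (Suc t))"
  using proj_linear[of "Suc t" "1 - \<beta>" "mom t" \<beta> "g (Suc t)"]
  by (simp add: mom_Suc proj_diff algebra_simps)

lemma norm_mom_minus_grad_power2_le: "(norm (mom t - g t))\<^sup>2 \<le> (norm (err t))\<^sup>2 + (norm (g t))\<^sup>2"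
proof -
  have orth: "inner (err t) (pg t - g t) = 0"
    by (metis proj_err proj_adjoint proj_idem inner_diff_right proj_diff diff_self inner_zero_right)
  have "inner (pg t) (g t) = (norm (pg t))\<^sup>2" by (simp add: norm_proj_power2)
  then have residual: "(norm (pg t - g t))\<^sup>2 = (norm (g t))\<^sup>2 - (norm (pg t))\<^sup>2"
    by (simp add: power2_norm_eq_inner inner_diff_left inner_diff_right inner_commute)
  define e v where "e = err t" and "v = pg t - g t"
  have "(norm (e + v))\<^sup>2 = (norm e)\<^sup>2 + (norm v)\<^sup>2"
    using orth unfolding e_def[symmetric] v_def[symmetric]
    by (simp add: power2_norm_eq_inner inner_add_left inner_add_right inner_commute)
  moreover have "mom t - g t = e + v" by (simp add: e_def v_def)
  ultimately have "(norm (mom t - g t))\<^sup>2 = (norm e)\<^sup>2 + (norm v)\<^sup>2" by simp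
  then show ?thesis using residual unfolding e_def v_def by simp
qed

lemma norm_grad_step_le: "norm (g t - g (Suc t)) \<le> L * \<eta> * norm (mom t)"
  using grad_lipschitz[of "x t" "x (Suc t)"] \<eta> by (simp add: x_Suc)

lemma norm_proj_Suc_mom_minus_grad_power2_le:
  "(norm (proj (Suc t) (mom t - g t)))\<^sup>2 \<le> (norm (err t))\<^sup>2 + refresh_term t"
proof (cases "Suc t mod \<tau> = 0")
  case True
  text \<open>After a refresh the new subspace is unrelated to the old one, and the error can only be
    bounded through \<open>mom t - g t\<close>, which costs \<open>(norm (g t))\<^sup>2\<close>.\<close>
  have "(norm (proj (Suc t) (mom t - g t)))\<^sup>2 \<le> (norm (mom t - g t))\<^sup>2"
    by (rule power_mono[OF norm_proj_le norm_ge_zero])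
  moreover have "refresh_term t = (norm (g t))\<^sup>2" using True by (simp add: refresh_term_def)
  ultimately show ?thesis using norm_mom_minus_grad_power2_le[of t] by linarith
next
  case False
  then show ?thesis by (simp add: proj_keep proj_diff proj_mom refresh_term_def)
qed

lemma err_Suc_power2_le:
  "(norm (err (Suc t)))\<^sup>2 \<le> (1 - \<beta>) * (norm (err t))\<^sup>2 + refresh_term t + \<kappa> / \<beta> * (norm (mom t))\<^sup>2"
proof -
  define w where "w = proj (Suc t) (mom t - g (Suc t))"
  define a where "a = norm (proj (Suc t) (mom t - g t))"
  define d where "d = norm (g t - g (Suc t))"
  have "w = proj (Suc t) (mom t - g t) + proj (Suc t) (g t - g (Suc t))"
    unfolding w_def by (simp add: proj_diff)
  then have "norm w \<le> a + norm (proj (Suc t) (g t - g (Suc t)))"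
    unfolding a_def by (simp add: norm_triangle_ineq)
  also have "\<dots> \<le> a + d" unfolding d_def using norm_proj_le by simp
  finally have a: "0 \<le> a" "norm w \<le> a + d" "a\<^sup>2 \<le> (norm (err t))\<^sup>2 + refresh_term t"
    unfolding a_def by (simp_all add: norm_proj_Suc_mom_minus_grad_power2_le)
  have d: "d\<^sup>2 \<le> \<kappa> * (norm (mom t))\<^sup>2"
    using power_mono[OF norm_grad_step_le[of t], of 2] unfolding d_def by (simp add: power_mult_distrib)
  have "(norm (err (Suc t)))\<^sup>2 = (1 - \<beta>)\<^sup>2 * (norm w)\<^sup>2"
    using \<beta> by (simp add: err_Suc w_def power_mult_distrib)
  also have "\<dots> \<le> (1 - \<beta>)\<^sup>2 * (a + d)\<^sup>2"
    using a \<beta> by (intro mult_left_mono power_mono) auto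
  also have "\<dots> \<le> (1 - \<beta>) * a\<^sup>2 + (1 - \<beta>)\<^sup>2 / \<beta> * d\<^sup>2" by (rule damped_power2_add_le[OF \<beta>])
  also have "\<dots> \<le> (1 - \<beta>) * ((norm (err t))\<^sup>2 + refresh_term t) + 1 / \<beta> * (\<kappa> * (norm (mom t))\<^sup>2)"
  proof (intro add_mono mult_left_mono)
    have "(1 - \<beta>)\<^sup>2 * d\<^sup>2 \<le> 1 * (\<kappa> * (norm (mom t))\<^sup>2)"
      using d \<beta> by (intro mult_mono) (auto simp: power_le_one)
    then show "(1 - \<beta>)\<^sup>2 / \<beta> * d\<^sup>2 \<le> 1 / \<beta> * (\<kappa> * (norm (mom t))\<^sup>2)"
      using \<beta> by (simp add: divide_right_mono)
  qed (use a \<beta> in auto)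
  also have "\<dots> \<le> (1 - \<beta>) * (norm (err t))\<^sup>2 + refresh_term t + \<kappa> / \<beta> * (norm (mom t))\<^sup>2"
  proof -
    have "(1 - \<beta>) * refresh_term t \<le> refresh_term t"
      using \<beta> by (simp add: refresh_term_def mult_left_le_one_le)
    then show ?thesis by (simp add: algebra_simps)
  qed
  finally show ?thesis .
qed

lemma err_0_power2_le: "(norm (err 0))\<^sup>2 \<le> (norm (g 0))\<^sup>2"
proof -
  have "err 0 = (\<beta> - 1) *\<^sub>R pg 0" by (simp add: mom_0 proj_scaleR algebra_simps)
  then have "norm (err 0) = (1 - \<beta>) * norm (pg 0)" using \<beta> by simp
  also have "\<dots> \<le> 1 * norm (g 0)" using \<beta> norm_proj_le by (intro mult_mono) auto
  finally show ?thesis by (simp add: power_mono)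
qed

end

context projected_momentum_descent
begin

abbreviation "grad_energy \<equiv> period_sum \<tau> (\<lambda>t. (norm (g t))\<^sup>2)"
abbreviation "proj_energy \<equiv> period_sum \<tau> (\<lambda>t. (norm (pg t))\<^sup>2)"
abbreviation "mom_energy \<equiv> period_sum \<tau> (\<lambda>t. (norm (mom t))\<^sup>2)"

lemma proj_within_period: "j < \<tau> \<Longrightarrow> proj (k * \<tau> + j) = proj (k * \<tau>)"
proof (induction j)
  case (Suc j)
  have "Suc (k * \<tau> + j) mod \<tau> = Suc j" using Suc.prems
    by (metis add_Suc_right mod_less mod_mult_self3 mult.commute)
  then have "proj (Suc (k * \<tau> + j)) = proj (k * \<tau> + j)" by (intro proj_keep) simp
  then show ?case using Suc by simp
qed simp

lemma x_within_period: "x (k * \<tau> + j) = x (k * \<tau>) - \<eta> *\<^sub>R (\<Sum>u<j. mom (k * \<tau> + u))"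
  by (induction j) (simp_all add: x_Suc algebra_simps)

lemma grad_drift_power2_le:
  assumes "j \<le> \<tau>"
  shows "(norm (g (k * \<tau> + j) - g (k * \<tau>)))\<^sup>2 \<le> \<kappa> * \<tau> * mom_energy k"
proof -
  have "norm (g (k * \<tau> + j) - g (k * \<tau>)) \<le> L * norm (x (k * \<tau> + j) - x (k * \<tau>))"
    by (rule grad_lipschitz)
  also have "\<dots> = L * \<eta> * norm (\<Sum>u<j. mom (k * \<tau> + u))"
    using \<eta> by (simp add: x_within_period)
  finally have "(norm (g (k * \<tau> + j) - g (k * \<tau>)))\<^sup>2 \<le> \<kappa> * (norm (\<Sum>u<j. mom (k * \<tau> + u)))\<^sup>2"
    by (simp add: power_mono power_mult_distrib flip: power_mult_distrib)
  also have "\<dots> \<le> \<kappa> * (real j * (\<Sum>u<j. (norm (mom (k * \<tau> + u)))\<^sup>2))"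
    using norm_sum_power2_le[of "\<lambda>u. mom (k * \<tau> + u)" "{..<j}"] by (simp add: mult_left_mono)
  also have "\<dots> \<le> \<kappa> * (\<tau> * mom_energy k)"
    unfolding period_sum_def using assms
    by (intro mult_left_mono mult_mono sum_mono2) (auto intro: sum_nonneg)
  finally show ?thesis by (simp add: mult.assoc)
qed

lemma grad_within_period_power2_le:
  assumes "j < \<tau>"
  shows "\<delta> * (norm (g (k * \<tau> + j)))\<^sup>2 \<le> 9/4 * (norm (pg (k * \<tau> + j)))\<^sup>2 + 15/2 * (\<kappa> * \<tau> * mom_energy k)"
proof -
  define D where "D = norm (g (k * \<tau> + j) - g (k * \<tau>))"
  have D: "D\<^sup>2 \<le> \<kappa> * \<tau> * mom_energy k" unfolding D_def using grad_drift_power2_le assms by simp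
  text \<open>Both the gradient and its projection onto the subspace fixed at \<open>k * \<tau>\<close> drift by at most \<open>D\<close>.\<close>
  have "norm (g (k * \<tau> + j)) \<le> norm (g (k * \<tau>)) + D"
    unfolding D_def using norm_triangle_ineq[of "g (k * \<tau>)" "g (k * \<tau> + j) - g (k * \<tau>)"] by simp
  from power2_le_of_le_add[OF norm_ge_zero this, of "1/2"]
  have g: "(norm (g (k * \<tau> + j)))\<^sup>2 \<le> 3/2 * (norm (g (k * \<tau>)))\<^sup>2 + 3 * D\<^sup>2" by simp
  have "proj (k * \<tau>) (g (k * \<tau>)) = pg (k * \<tau> + j) + proj (k * \<tau>) (g (k * \<tau>) - g (k * \<tau> + j))"
    using proj_within_period[OF assms] by (simp add: proj_diff)
  then have "norm (proj (k * \<tau>) (g (k * \<tau>))) \<le> norm (pg (k * \<tau> + j)) + D"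
    using norm_triangle_ineq[of "pg (k * \<tau> + j)" "proj (k * \<tau>) (g (k * \<tau>) - g (k * \<tau> + j))"]
      norm_proj_le[of "k * \<tau>" "g (k * \<tau>) - g (k * \<tau> + j)"]
    unfolding D_def by (simp add: norm_minus_commute)
  from power2_le_of_le_add[OF norm_ge_zero this, of "1/2"]
  have p: "(norm (pg (k * \<tau>)))\<^sup>2 \<le> 3/2 * (norm (pg (k * \<tau> + j)))\<^sup>2 + 3 * D\<^sup>2" by simp
  have "\<delta> * (norm (g (k * \<tau>)))\<^sup>2 \<le> (norm (pg (k * \<tau>)))\<^sup>2" by (rule proj_refresh) simp
  moreover have "\<delta> * D\<^sup>2 \<le> D\<^sup>2" using \<delta> by (simp add: mult_left_le_one_le)
  moreover have "\<delta> * (norm (g (k * \<tau> + j)))\<^sup>2 \<le> \<delta> * (3/2 * (norm (g (k * \<tau>)))\<^sup>2 + 3 * D\<^sup>2)"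
    using g \<delta> by (intro mult_left_mono) auto
  ultimately show ?thesis using p D by (simp add: algebra_simps)
qed

lemma grad_energy_le:
  "\<delta> * grad_energy k \<le> 9/4 * proj_energy k + 15/2 * (\<kappa> * \<tau>\<^sup>2 * mom_energy k)"
proof -
  have "\<delta> * grad_energy k = (\<Sum>u<\<tau>. \<delta> * (norm (g (k * \<tau> + u)))\<^sup>2)"
    by (simp add: period_sum_def sum_distrib_left)
  also have "\<dots> \<le> (\<Sum>u<\<tau>. 9/4 * (norm (pg (k * \<tau> + u)))\<^sup>2 + 15/2 * (\<kappa> * \<tau> * mom_energy k))"
    by (intro sum_mono grad_within_period_power2_le) simp
  also have "\<dots> = 9/4 * proj_energy k + 15/2 * (\<kappa> * \<tau>\<^sup>2 * mom_energy k)"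
    by (simp add: period_sum_def sum.distrib sum_distrib_left power2_eq_square algebra_simps)
  finally show ?thesis .
qed

lemma period_grad_power2_le:
  assumes "s < \<tau>"
  shows "\<tau> * (norm (g (k * \<tau> + s)))\<^sup>2 \<le> 2 * grad_energy k + 8 * (\<kappa> * \<tau>\<^sup>2 * mom_energy k)"
proof -
  have single: "(norm (g (k * \<tau> + s)))\<^sup>2 \<le> 2 * (norm (g (k * \<tau> + u)))\<^sup>2 + 8 * (\<kappa> * \<tau> * mom_energy k)"
    if "u < \<tau>" for u
  proof -
    define Ds Du where "Ds = norm (g (k * \<tau> + s) - g (k * \<tau>))" and "Du = norm (g (k * \<tau> + u) - g (k * \<tau>))"
    have "Ds\<^sup>2 \<le> \<kappa> * \<tau> * mom_energy k" "Du\<^sup>2 \<le> \<kappa> * \<tau> * mom_energy k"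
      unfolding Ds_def Du_def using grad_drift_power2_le assms that by auto
    moreover have "norm (g (k * \<tau> + s) - g (k * \<tau> + u)) \<le> Ds + Du"
      unfolding Ds_def Du_def
      using norm_triangle_ineq4[of "g (k * \<tau> + s) - g (k * \<tau>)" "g (k * \<tau> + u) - g (k * \<tau>)"] by simp
    from power2_le_of_le_add[OF norm_ge_zero this, of 1]
    have "(norm (g (k * \<tau> + s) - g (k * \<tau> + u)))\<^sup>2 \<le> 2 * Ds\<^sup>2 + 2 * Du\<^sup>2" by simp
    moreover have "norm (g (k * \<tau> + s)) \<le> norm (g (k * \<tau> + u)) + norm (g (k * \<tau> + s) - g (k * \<tau> + u))"
      using norm_triangle_ineq[of "g (k * \<tau> + u)" "g (k * \<tau> + s) - g (k * \<tau> + u)"] by simp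
    from power2_le_of_le_add[OF norm_ge_zero this, of 1]
    have "(norm (g (k * \<tau> + s)))\<^sup>2 \<le> 2 * (norm (g (k * \<tau> + u)))\<^sup>2 + 2 * (norm (g (k * \<tau> + s) - g (k * \<tau> + u)))\<^sup>2"
      by simp
    ultimately show ?thesis by linarith
  qed
  have "\<tau> * (norm (g (k * \<tau> + s)))\<^sup>2 = (\<Sum>u<\<tau>. (norm (g (k * \<tau> + s)))\<^sup>2)" by simp
  also have "\<dots> \<le> (\<Sum>u<\<tau>. 2 * (norm (g (k * \<tau> + u)))\<^sup>2 + 8 * (\<kappa> * \<tau> * mom_energy k))"
    by (intro sum_mono single) simp
  also have "\<dots> = 2 * grad_energy k + 8 * (\<kappa> * \<tau>\<^sup>2 * mom_energy k)"
    by (simp add: period_sum_def sum.distrib sum_distrib_left power2_eq_square algebra_simps)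
  finally show ?thesis .
qed

lemma period_sum_refresh_term: "period_sum \<tau> refresh_term k = (norm (g (k * \<tau> + (\<tau> - 1))))\<^sup>2"
proof -
  obtain p where p: "\<tau> = Suc p" using \<tau> by (cases \<tau>) auto
  have zero: "refresh_term (k * \<tau> + u) = 0" if "u < p" for u
  proof -
    have "Suc (k * \<tau> + u) mod \<tau> = Suc u" using that p
      by (metis add_Suc_right less_Suc_eq mod_less mod_mult_self3 mult.commute Suc_less_eq)
    then show ?thesis unfolding refresh_term_def by simp
  qed
  have "Suc (k * \<tau> + p) = Suc k * \<tau>" using p by simp
  then have last: "refresh_term (k * \<tau> + p) = (norm (g (k * \<tau> + p)))\<^sup>2"
    unfolding refresh_term_def by simp
  have "period_sum \<tau> refresh_term k = (\<Sum>u<Suc p. refresh_term (k * \<tau> + u))"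
    unfolding period_sum_def by (simp only: p)
  also have "\<dots> = refresh_term (k * \<tau> + p)" using zero by simp
  also have "\<dots> = (norm (g (k * \<tau> + p)))\<^sup>2" by (rule last)
  finally show ?thesis using p by simp
qed

lemma total_grad_energy_le:
  "\<delta> * (\<Sum>t<K * \<tau>. (norm (g t))\<^sup>2)
     \<le> 9/4 * (\<Sum>t<K * \<tau>. (norm (pg t))\<^sup>2) + 15/2 * (\<kappa> * \<tau>\<^sup>2 * (\<Sum>t<K * \<tau>. (norm (mom t))\<^sup>2))"
proof -
  have "\<delta> * (\<Sum>k<K. grad_energy k) \<le> (\<Sum>k<K. 9/4 * proj_energy k + 15/2 * (\<kappa> * \<tau>\<^sup>2 * mom_energy k))"
    unfolding sum_distrib_left by (intro sum_mono grad_energy_le)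
  also have "\<dots> = 9/4 * (\<Sum>k<K. proj_energy k) + 15/2 * (\<kappa> * \<tau>\<^sup>2 * (\<Sum>k<K. mom_energy k))"
    by (simp only: sum.distrib sum_distrib_left)
  finally show ?thesis by (simp only: sum_lessThan_mult_eq_period_sums)
qed

lemma total_err_energy_le_refresh_grads:
  "\<beta> * (\<Sum>t<K * \<tau>. (norm (err t))\<^sup>2)
     \<le> (norm (g 0))\<^sup>2 + (\<Sum>k<K. (norm (g (k * \<tau> + (\<tau> - 1))))\<^sup>2) + \<kappa> / \<beta> * (\<Sum>t<K * \<tau>. (norm (mom t))\<^sup>2)"
proof -
  have "\<beta> * (\<Sum>t<K * \<tau>. (norm (err t))\<^sup>2)
      \<le> (norm (g 0))\<^sup>2 + (\<Sum>t<K * \<tau>. refresh_term t + \<kappa> / \<beta> * (norm (mom t))\<^sup>2)"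
  proof (rule contracting_sum_bound[where e="\<lambda>t. (norm (err t))\<^sup>2", OF err_0_power2_le])
    show "(norm (err (Suc t)))\<^sup>2 \<le> (1 - \<beta>) * (norm (err t))\<^sup>2 + (refresh_term t + \<kappa> / \<beta> * (norm (mom t))\<^sup>2)" for t
      using err_Suc_power2_le[of t] by (simp add: add.assoc)
  qed (use \<beta> in \<open>auto simp: refresh_term_def\<close>)
  also have "\<dots> = (norm (g 0))\<^sup>2 + (\<Sum>k<K. (norm (g (k * \<tau> + (\<tau> - 1))))\<^sup>2) + \<kappa> / \<beta> * (\<Sum>t<K * \<tau>. (norm (mom t))\<^sup>2)"
    by (simp add: sum.distrib sum_distrib_left sum_lessThan_mult_eq_period_sums[of refresh_term]
        period_sum_refresh_term)
  finally show ?thesis .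
qed

text \<open>A gradient at a refresh differs from every gradient of its period by at most twice the
  drift, so the refresh costs are paid for by \<open>G / \<tau>\<close>.\<close>

lemma refresh_grads_le:
  assumes "1 \<le> K"
  defines "G \<equiv> \<Sum>t<K * \<tau>. (norm (g t))\<^sup>2" and "N \<equiv> \<Sum>t<K * \<tau>. (norm (mom t))\<^sup>2"
  shows "\<tau> * ((norm (g 0))\<^sup>2 + (\<Sum>k<K. (norm (g (k * \<tau> + (\<tau> - 1))))\<^sup>2)) \<le> 4 * G + 16 * (\<kappa> * \<tau>\<^sup>2 * N)"
proof -
  have G: "G = (\<Sum>k<K. grad_energy k)" and N: "N = (\<Sum>k<K. mom_energy k)"
    unfolding G_def N_def by (rule sum_lessThan_mult_eq_period_sums)+
  have "\<tau> * (\<Sum>k<K. (norm (g (k * \<tau> + (\<tau> - 1))))\<^sup>2) \<le> (\<Sum>k<K. 2 * grad_energy k + 8 * (\<kappa> * \<tau>\<^sup>2 * mom_energy k))"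
    unfolding sum_distrib_left using \<tau> by (intro sum_mono period_grad_power2_le) auto
  also have "\<dots> = 2 * G + 8 * (\<kappa> * \<tau>\<^sup>2 * N)" by (simp add: G N sum.distrib sum_distrib_left)
  finally have last_steps: "\<tau> * (\<Sum>k<K. (norm (g (k * \<tau> + (\<tau> - 1))))\<^sup>2) \<le> 2 * G + 8 * (\<kappa> * \<tau>\<^sup>2 * N)" .
  have "grad_energy 0 \<le> G" "mom_energy 0 \<le> N"
    unfolding G N using assms by (intro member_le_sum; auto simp: period_sum_def intro: sum_nonneg)+
  then have "2 * grad_energy 0 + 8 * (\<kappa> * \<tau>\<^sup>2 * mom_energy 0) \<le> 2 * G + 8 * (\<kappa> * \<tau>\<^sup>2 * N)"
    by (intro add_mono mult_left_mono) auto
  with period_grad_power2_le[of 0 0] \<tau>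
  have "\<tau> * (norm (g 0))\<^sup>2 \<le> 2 * G + 8 * (\<kappa> * \<tau>\<^sup>2 * N)" by simp
  with last_steps show ?thesis by (simp add: distrib_left)
qed

lemma total_err_energy_le:
  assumes "1 \<le> K"
  defines "G \<equiv> \<Sum>t<K * \<tau>. (norm (g t))\<^sup>2" and "N \<equiv> \<Sum>t<K * \<tau>. (norm (mom t))\<^sup>2"
  shows "\<tau> * \<beta> * (\<Sum>t<K * \<tau>. (norm (err t))\<^sup>2) \<le> 4 * G + 16 * (\<kappa> * \<tau>\<^sup>2 * N) + \<tau> * \<kappa> / \<beta> * N"
proof -
  have "\<tau> * \<beta> * (\<Sum>t<K * \<tau>. (norm (err t))\<^sup>2) = \<tau> * (\<beta> * (\<Sum>t<K * \<tau>. (norm (err t))\<^sup>2))" by simp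
  also have "\<dots> \<le> \<tau> * ((norm (g 0))\<^sup>2 + (\<Sum>k<K. (norm (g (k * \<tau> + (\<tau> - 1))))\<^sup>2) + \<kappa> / \<beta> * N)"
    unfolding N_def by (intro mult_left_mono total_err_energy_le_refresh_grads) simp
  also have "\<dots> \<le> 4 * G + 16 * (\<kappa> * \<tau>\<^sup>2 * N) + \<tau> * \<kappa> / \<beta> * N"
    using refresh_grads_le[OF assms(1)] unfolding G_def N_def by (simp add: distrib_left)
  finally show ?thesis .
qed

end

lemma momentum_budget:
  fixes G H N E \<delta> \<beta> \<tau> \<kappa> c :: real
  assumes nonneg: "0 \<le> G" "0 \<le> H" "0 \<le> N" "0 \<le> \<kappa>"
    and \<delta>: "0 < \<delta>" "\<delta> \<le> 1" and pos: "0 < \<beta>" "0 < \<tau>"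
    and grad: "\<delta> * G \<le> 9/4 * H + 15/2 * (\<kappa> * \<tau>\<^sup>2 * N)"
    and err: "\<tau> * \<beta> * E \<le> 4 * G + 16 * (\<kappa> * \<tau>\<^sup>2 * N) + \<tau> * \<kappa> / \<beta> * N"
    and c1: "c \<le> 1/4" and c2: "\<kappa> \<le> 3 * \<delta> * \<beta>\<^sup>2 / 80" and c3: "\<kappa> * \<tau>\<^sup>2 \<le> 3 * \<delta> / 80"
    and c4: "64/3 \<le> \<tau> * \<beta> * \<delta>"
  shows "\<delta> * G / 8 \<le> H + (1 - 2 * c) * N - E"
proof -
  define q where "q = \<tau> * \<beta>"
  have q: "0 < q" unfolding q_def using pos by simp
  have "4 * G \<le> q * (3 * \<delta> / 16) * G"
    using c4 nonneg by (intro mult_right_mono) (auto simp: q_def)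
  moreover have "16 * (\<kappa> * \<tau>\<^sup>2 * N) \<le> q * (3/100) * N"
  proof -
    text \<open>\<open>20 * \<delta> \<le> 64 / (3 * \<delta>) \<le> q\<close>, as \<open>\<delta> \<le> 1\<close>.\<close>
    have "20 * (\<delta> * \<delta>) \<le> \<tau> * \<beta> * \<delta>" using c4 \<delta> mult_le_one[of \<delta> \<delta>] by linarith
    then have "(20 * \<delta>) * \<delta> \<le> q * \<delta>" unfolding q_def by (metis mult.assoc)
    then have "20 * \<delta> \<le> q" using \<delta>(1) by (rule mult_right_le_imp_le)
    then have "16 * (\<kappa> * \<tau>\<^sup>2) \<le> q * (3/100)" using c3 by simp
    then show ?thesis using nonneg by (simp add: mult_right_mono mult.assoc flip: mult.assoc)
  qed
  moreover have "\<tau> * \<kappa> / \<beta> * N \<le> q * (3/80) * N"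
  proof -
    have "\<delta> * \<beta>\<^sup>2 \<le> \<beta>\<^sup>2" using \<delta> by (simp add: mult_left_le_one_le)
    then have "\<kappa> \<le> 3/80 * \<beta>\<^sup>2" using c2 by simp
    then have "\<kappa> / \<beta>\<^sup>2 \<le> 3/80" using pos by (simp add: divide_le_eq)
    then have "q * (\<kappa> / \<beta>\<^sup>2) \<le> q * (3/80)" using q by (intro mult_left_mono) auto
    have "\<tau> * \<kappa> / \<beta> * N = q * (\<kappa> / \<beta>\<^sup>2) * N"
      unfolding q_def using pos by (simp add: power2_eq_square)
    also have "\<dots> \<le> q * (3/80) * N"
      using \<open>q * (\<kappa> / \<beta>\<^sup>2) \<le> q * (3/80)\<close> nonneg(3) by (rule mult_right_mono)
    finally show ?thesis .
  qed
  ultimately have "q * E \<le> q * (3 * \<delta> / 16 * G + 27/400 * N)"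
    using err unfolding q_def by (simp add: algebra_simps)
  then have E: "E \<le> 3 * \<delta> / 16 * G + 27/400 * N" using q by simp
  have "\<kappa> * \<tau>\<^sup>2 * N \<le> 3 / 80 * N" using c3 \<delta> nonneg by (intro mult_right_mono) auto
  then have "\<delta> * G \<le> 9/4 * H + 9/32 * N" using grad by simp
  moreover have "1/2 * N \<le> (1 - 2 * c) * N" using c1 nonneg by (intro mult_right_mono) auto
  ultimately show ?thesis using E nonneg by (simp add: field_simps)
qed

context projected_momentum_descent
begin

lemma gradient_energy_bound:
  assumes "1 \<le> K"
    and c1: "L * \<eta> \<le> 1/4" and c2: "\<kappa> \<le> 3 * \<delta> * \<beta>\<^sup>2 / 80" and c3: "\<kappa> * \<tau>\<^sup>2 \<le> 3 * \<delta> / 80"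
    and c4: "64/3 \<le> \<tau> * \<beta> * \<delta>"
  shows "\<delta> * \<eta> * (\<Sum>t<K * \<tau>. (norm (g t))\<^sup>2) \<le> 16 * (f (x 0) - f (x (K * \<tau>)))"
proof -
  let ?G = "\<Sum>t<K * \<tau>. (norm (g t))\<^sup>2" and ?H = "\<Sum>t<K * \<tau>. (norm (pg t))\<^sup>2"
    and ?N = "\<Sum>t<K * \<tau>. (norm (mom t))\<^sup>2" and ?E = "\<Sum>t<K * \<tau>. (norm (err t))\<^sup>2"
  let ?decrease = "?H + (1 - 2 * (L * \<eta>)) * ?N - ?E"
  have "\<delta> * ?G / 8 \<le> ?decrease"
  proof (rule momentum_budget[where \<tau>="real \<tau>"])
    show "\<delta> * ?G \<le> 9/4 * ?H + 15/2 * (\<kappa> * (real \<tau>)\<^sup>2 * ?N)"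
      using total_grad_energy_le by simp
    show "\<tau> * \<beta> * ?E \<le> 4 * ?G + 16 * (\<kappa> * (real \<tau>)\<^sup>2 * ?N) + \<tau> * \<kappa> / \<beta> * ?N"
      using total_err_energy_le[OF \<open>1 \<le> K\<close>] by simp
  qed (use \<beta> \<tau> \<delta> c1 c2 c3 c4 in \<open>auto intro: sum_nonneg\<close>)
  then have "\<eta> / 2 * (\<delta> * ?G / 8) \<le> \<eta> / 2 * ?decrease"
    using \<eta> by (intro mult_left_mono) auto
  moreover have "f (x (K * \<tau>)) \<le> f (x 0) - \<eta> / 2 * ?decrease"
    using descent_sum[of "K * \<tau>"] by (simp add: sum.distrib sum_subtractf sum_distrib_left mult.assoc)
  ultimately have "\<eta> / 2 * (\<delta> * ?G / 8) \<le> f (x 0) - f (x (K * \<tau>))"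
    by linarith
  then show ?thesis by (simp add: field_simps)
qed

end

section \<open>Frobenius inner product and orthogonal projections of matrices\<close>

definition frob_inner :: "real mat \<Rightarrow> real mat \<Rightarrow> real" where
  "frob_inner A B = (\<Sum>i<dim_row A. \<Sum>j<dim_col A. A $$ (i,j) * B $$ (i,j))"

lemma frob_inner_mult_left:
  assumes A: "A \<in> carrier_mat p q" and X: "X \<in> carrier_mat q k" and Y: "Y \<in> carrier_mat p k"
  shows "frob_inner (A * X) Y = frob_inner X (transpose_mat A * Y)"
proof -
  have "frob_inner (A * X) Y = (\<Sum>i<p. \<Sum>j<k. (\<Sum>s<q. A $$ (i,s) * X $$ (s,j)) * Y $$ (i,j))"
    using A X Y unfolding frob_inner_def
    by (auto simp: scalar_prod_def atLeast0LessThan intro!: sum.cong)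
  also have "\<dots> = (\<Sum>i<p. \<Sum>j<k. \<Sum>s<q. X $$ (s,j) * (A $$ (i,s) * Y $$ (i,j)))"
    by (simp add: sum_distrib_left sum_distrib_right mult_ac)
  also have "\<dots> = (\<Sum>j<k. \<Sum>i<p. \<Sum>s<q. X $$ (s,j) * (A $$ (i,s) * Y $$ (i,j)))"
    by (rule sum.swap)
  also have "\<dots> = (\<Sum>j<k. \<Sum>s<q. \<Sum>i<p. X $$ (s,j) * (A $$ (i,s) * Y $$ (i,j)))"
    by (intro sum.cong refl sum.swap)
  also have "\<dots> = (\<Sum>s<q. \<Sum>j<k. \<Sum>i<p. X $$ (s,j) * (A $$ (i,s) * Y $$ (i,j)))"
    by (rule sum.swap)
  also have "\<dots> = frob_inner X (transpose_mat A * Y)"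
    using A X Y unfolding frob_inner_def
    by (auto simp: scalar_prod_def atLeast0LessThan sum_distrib_left intro!: sum.cong)
  finally show ?thesis .
qed

lemma frob_inner_transpose:
  assumes "A \<in> carrier_mat p q" "B \<in> carrier_mat p q"
  shows "frob_inner A B = frob_inner (transpose_mat A) (transpose_mat B)"
  using assms unfolding frob_inner_def by (auto intro: sum.swap)

lemma frob_inner_commute:
  assumes "A \<in> carrier_mat p q" "B \<in> carrier_mat p q"
  shows "frob_inner A B = frob_inner B A"
  using assms unfolding frob_inner_def by (auto simp: mult.commute)

lemma frob_inner_mult_right:
  assumes X: "X \<in> carrier_mat p q" and C: "C \<in> carrier_mat q k" and Y: "Y \<in> carrier_mat p k"
  shows "frob_inner (X * C) Y = frob_inner X (Y * transpose_mat C)"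
proof -
  have "frob_inner (X * C) Y = frob_inner (transpose_mat (X * C)) (transpose_mat Y)"
    using X C Y by (intro frob_inner_transpose) auto
  also have "transpose_mat (X * C) = transpose_mat C * transpose_mat X"
    using X C by (rule transpose_mult)
  also have "frob_inner (transpose_mat C * transpose_mat X) (transpose_mat Y)
      = frob_inner (transpose_mat X) (transpose_mat (transpose_mat C) * transpose_mat Y)"
    using X C Y by (intro frob_inner_mult_left) auto
  also have "transpose_mat (transpose_mat C) * transpose_mat Y = transpose_mat (Y * transpose_mat C)"
    using C Y by (simp add: transpose_mult[of Y p k "transpose_mat C" q])
  also have "frob_inner (transpose_mat X) (transpose_mat (Y * transpose_mat C)) = frob_inner X (Y * transpose_mat C)"
    using X C Y by (intro frob_inner_transpose[symmetric]) auto
  finally show ?thesis .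
qed

lemma frob_inner_self_nonneg: "0 \<le> frob_inner A A"
  unfolding frob_inner_def by (auto intro!: sum_nonneg)

lemma frob_inner_orthogonal_left:
  assumes U: "U \<in> carrier_mat m m" and O: "transpose_mat U * U = 1\<^sub>m m" and Z: "Z \<in> carrier_mat m k"
  shows "frob_inner (U * Z) (U * Z) = frob_inner Z Z"
proof -
  have "frob_inner (U * Z) (U * Z) = frob_inner Z (transpose_mat U * (U * Z))"
    using U Z by (intro frob_inner_mult_left) auto
  also have "transpose_mat U * (U * Z) = (transpose_mat U * U) * Z"
    using U Z by (intro assoc_mult_mat[symmetric]) auto
  finally show ?thesis using O Z by simp
qed

lemma frob_inner_orthogonal_right:
  assumes V: "V \<in> carrier_mat n n" and O: "transpose_mat V * V = 1\<^sub>m n" and Z: "Z \<in> carrier_mat k n"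
  shows "frob_inner (Z * transpose_mat V) (Z * transpose_mat V) = frob_inner Z Z"
proof -
  have "frob_inner (Z * transpose_mat V) (Z * transpose_mat V)
      = frob_inner Z (Z * transpose_mat V * transpose_mat (transpose_mat V))"
    using V Z by (intro frob_inner_mult_right) auto
  also have "Z * transpose_mat V * transpose_mat (transpose_mat V) = Z * (transpose_mat V * V)"
    using V Z by (simp add: assoc_mult_mat[of Z k n "transpose_mat V" n V n])
  finally show ?thesis using O Z by simp
qed

definition left_proj :: "real mat \<Rightarrow> real mat \<Rightarrow> real mat" where
  "left_proj P X = P * (transpose_mat P * X)"

definition right_proj :: "real mat \<Rightarrow> real mat \<Rightarrow> real mat" where
  "right_proj Q X = X * Q * transpose_mat Q"

lemma left_proj_carrier: "P \<in> carrier_mat m r \<Longrightarrow> X \<in> carrier_mat m n \<Longrightarrow> left_proj P X \<in> carrier_mat m n"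
  unfolding left_proj_def by auto

lemma right_proj_carrier: "Q \<in> carrier_mat n r \<Longrightarrow> X \<in> carrier_mat m n \<Longrightarrow> right_proj Q X \<in> carrier_mat m n"
  unfolding right_proj_def by auto

lemma left_proj_idem:
  assumes P: "P \<in> carrier_mat m r" and O: "transpose_mat P * P = 1\<^sub>m r" and X: "X \<in> carrier_mat m n"
  shows "left_proj P (left_proj P X) = left_proj P X"
proof -
  have "transpose_mat P * (P * (transpose_mat P * X)) = (transpose_mat P * P) * (transpose_mat P * X)"
    using P X by (simp add: assoc_mult_mat[of _ r m _ r _ n])
  also have "\<dots> = transpose_mat P * X" using O P X by auto
  finally show ?thesis unfolding left_proj_def by simp
qed

lemma right_proj_idem:
  assumes Q: "Q \<in> carrier_mat n r" and O: "transpose_mat Q * Q = 1\<^sub>m r" and X: "X \<in> carrier_mat m n"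
  shows "right_proj Q (right_proj Q X) = right_proj Q X"
proof -
  have "X * Q * transpose_mat Q * Q = X * Q * (transpose_mat Q * Q)"
    using Q X by (intro assoc_mult_mat[of _ m r _ n _ r]) auto
  also have "\<dots> = X * Q" using O Q X by auto
  finally show ?thesis unfolding right_proj_def by simp
qed

lemma left_proj_adjoint:
  assumes P: "P \<in> carrier_mat m r" and X: "X \<in> carrier_mat m n" and Y: "Y \<in> carrier_mat m n"
  shows "frob_inner (left_proj P X) Y = frob_inner X (left_proj P Y)"
proof -
  have "frob_inner (left_proj P X) Y = frob_inner (transpose_mat P * X) (transpose_mat P * Y)"
    unfolding left_proj_def using P X Y by (intro frob_inner_mult_left) auto
  also have "\<dots> = frob_inner (transpose_mat P * Y) (transpose_mat P * X)"
    using P X Y by (intro frob_inner_commute) auto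
  also have "\<dots> = frob_inner (left_proj P Y) X"
    unfolding left_proj_def using P X Y by (intro frob_inner_mult_left[symmetric]) auto
  also have "\<dots> = frob_inner X (left_proj P Y)"
    using P X Y by (intro frob_inner_commute left_proj_carrier)
  finally show ?thesis .
qed

lemma right_proj_adjoint:
  assumes Q: "Q \<in> carrier_mat n r" and X: "X \<in> carrier_mat m n" and Y: "Y \<in> carrier_mat m n"
  shows "frob_inner (right_proj Q X) Y = frob_inner X (right_proj Q Y)"
proof -
  have "frob_inner (right_proj Q X) Y = frob_inner (X * Q) (Y * Q)"
    unfolding right_proj_def using Q X Y frob_inner_mult_right[of "X * Q" m r "transpose_mat Q" n Y] by auto
  also have "\<dots> = frob_inner (Y * Q) (X * Q)"
    using Q X Y by (intro frob_inner_commute) auto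
  also have "\<dots> = frob_inner (right_proj Q Y) X"
    unfolding right_proj_def using Q X Y frob_inner_mult_right[of "Y * Q" m r "transpose_mat Q" n X] by auto
  also have "\<dots> = frob_inner X (right_proj Q Y)"
    using Q X Y by (intro frob_inner_commute right_proj_carrier)
  finally show ?thesis .
qed

lemma left_proj_linear:
  assumes P: "P \<in> carrier_mat m r" and X: "X \<in> carrier_mat m n" and Y: "Y \<in> carrier_mat m n"
  shows "left_proj P (a \<cdot>\<^sub>m X + b \<cdot>\<^sub>m Y) = a \<cdot>\<^sub>m left_proj P X + b \<cdot>\<^sub>m left_proj P Y"
  using P X Y by (simp add: left_proj_def mult_add_distrib_mat[of _ r m _ n] mult_add_distrib_mat[of _ m r _ n]
      mult_smult_distrib[of _ r m _ n] mult_smult_distrib[of _ m r _ n])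

lemma right_proj_linear:
  assumes Q: "Q \<in> carrier_mat n r" and X: "X \<in> carrier_mat m n" and Y: "Y \<in> carrier_mat m n"
  shows "right_proj Q (a \<cdot>\<^sub>m X + b \<cdot>\<^sub>m Y) = a \<cdot>\<^sub>m right_proj Q X + b \<cdot>\<^sub>m right_proj Q Y"
  using Q X Y by (simp add: right_proj_def add_mult_distrib_mat[of _ m n _ _ r] add_mult_distrib_mat[of _ m r _ _ n]
      mult_smult_assoc_mat[of _ m n _ r] mult_smult_assoc_mat[of _ m r _ n])

lemma left_proj_momentum_update:
  assumes P': "P' \<in> carrier_mat m r" and P: "P \<in> carrier_mat m s" and M: "M \<in> carrier_mat s n"
    and G: "G \<in> carrier_mat m n"
  shows "P' * (a \<cdot>\<^sub>m (transpose_mat P' * P * M) + b \<cdot>\<^sub>m (transpose_mat P' * G))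
      = a \<cdot>\<^sub>m left_proj P' (P * M) + b \<cdot>\<^sub>m left_proj P' G"
proof -
  have "transpose_mat P' * P * M = transpose_mat P' * (P * M)"
    using P' P M by (intro assoc_mult_mat) auto
  then show ?thesis
    using P' P M G by (simp add: left_proj_def mult_add_distrib_mat[of _ m r _ n] mult_smult_distrib[of _ m r _ n])
qed

lemma right_proj_momentum_update:
  assumes Q': "Q' \<in> carrier_mat n r" and Q: "Q \<in> carrier_mat n s" and M: "M \<in> carrier_mat m s"
    and G: "G \<in> carrier_mat m n"
  shows "(a \<cdot>\<^sub>m (M * transpose_mat Q * Q') + b \<cdot>\<^sub>m (G * Q')) * transpose_mat Q'
      = a \<cdot>\<^sub>m right_proj Q' (M * transpose_mat Q) + b \<cdot>\<^sub>m right_proj Q' G"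
  using Q' Q M G by (simp add: right_proj_def add_mult_distrib_mat[of _ m r _ _ n] mult_smult_assoc_mat[of _ m r _ n])

lemma left_proj_smult: "P \<in> carrier_mat m r \<Longrightarrow> G \<in> carrier_mat m n \<Longrightarrow> P * (c \<cdot>\<^sub>m (transpose_mat P * G)) = left_proj P (c \<cdot>\<^sub>m G)"
  by (simp add: left_proj_def mult_smult_distrib[of _ m r _ n] mult_smult_distrib[of _ r m _ n])

lemma right_proj_smult: "Q \<in> carrier_mat n r \<Longrightarrow> G \<in> carrier_mat m n \<Longrightarrow> (c \<cdot>\<^sub>m (G * Q)) * transpose_mat Q = right_proj Q (c \<cdot>\<^sub>m G)"
  by (simp add: right_proj_def mult_smult_assoc_mat[of _ m r _ n] mult_smult_assoc_mat[of _ m n _ r])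

section \<open>Energy retained by a truncated singular value decomposition\<close>

lemma is_svdD:
  assumes "is_svd G U S V" "G \<in> carrier_mat m n"
  shows "U \<in> carrier_mat m m" "V \<in> carrier_mat n n" "S \<in> carrier_mat m n"
    "transpose_mat U * U = 1\<^sub>m m" "transpose_mat V * V = 1\<^sub>m n"
    "\<forall>i<m. \<forall>j<n. i \<noteq> j \<longrightarrow> S $$ (i,j) = 0"
    "\<forall>i<min m n. 0 \<le> S $$ (i,i)"
    "\<forall>i j. i \<le> j \<longrightarrow> j < min m n \<longrightarrow> S $$ (j,j) \<le> S $$ (i,i)"
    "G = U * S * transpose_mat V"
  using assms unfolding is_svd_def Let_def by auto

lemma first_cols_carrier: "U \<in> carrier_mat m m \<Longrightarrow> first_cols r U \<in> carrier_mat m r"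
  unfolding first_cols_def by auto

lemma transpose_first_cols_mult:
  assumes U: "U \<in> carrier_mat m m" and O: "transpose_mat U * U = 1\<^sub>m m" and r: "r \<le> m"
  shows "transpose_mat (first_cols r U) * U = mat r m (\<lambda>(i,k). if i = k then 1 else 0)"
proof (rule eq_matI)
  fix i k assume "i < dim_row (mat r m (\<lambda>(i,k). if i = k then (1::real) else 0))"
    "k < dim_col (mat r m (\<lambda>(i,k). if i = k then (1::real) else 0))"
  then have ik: "i < r" "k < m" by auto
  have "(transpose_mat (first_cols r U) * U) $$ (i, k) = (transpose_mat U * U) $$ (i, k)"
    using U ik r unfolding first_cols_def by (simp add: scalar_prod_def)
  then show "(transpose_mat (first_cols r U) * U) $$ (i, k) = mat r m (\<lambda>(i,k). if i = k then 1 else 0) $$ (i, k)"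
    using O ik r by simp
qed (use U in \<open>auto simp: first_cols_def\<close>)

lemma first_cols_orthonormal:
  assumes U: "U \<in> carrier_mat m m" and O: "transpose_mat U * U = 1\<^sub>m m" and r: "r \<le> m"
  shows "transpose_mat (first_cols r U) * first_cols r U = 1\<^sub>m r"
proof (rule eq_matI)
  fix i j assume "i < dim_row (1\<^sub>m r)" "j < dim_col (1\<^sub>m r)"
  then have ij: "i < r" "j < r" by auto
  have "(transpose_mat (first_cols r U) * first_cols r U) $$ (i, j) = (transpose_mat U * U) $$ (i, j)"
    using U ij r unfolding first_cols_def by (simp add: scalar_prod_def)
  then show "(transpose_mat (first_cols r U) * first_cols r U) $$ (i, j) = 1\<^sub>m r $$ (i, j)"
    using O ij r by simp
qed (use U in \<open>auto simp: first_cols_def\<close>)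

lemma prefix_sum_ge_average:
  fixes a :: "nat \<Rightarrow> real"
  assumes mono: "\<And>i j. i \<le> j \<Longrightarrow> j < p \<Longrightarrow> a j \<le> a i" and r: "r \<le> p"
  shows "real r * (\<Sum>i<p. a i) \<le> real p * (\<Sum>i<r. a i)"
proof -
  have "0 \<le> (\<Sum>i<r. \<Sum>j\<in>{r..<p}. a i - a j)"
    using mono by (intro sum_nonneg) auto
  also have "\<dots> = (\<Sum>i<r. real (p - r) * a i - (\<Sum>j\<in>{r..<p}. a j))"
    by (simp add: sum_subtractf)
  also have "\<dots> = real (p - r) * (\<Sum>i<r. a i) - real r * (\<Sum>j\<in>{r..<p}. a j)"
    by (simp add: sum_subtractf sum_distrib_left)
  finally have 1: "real r * (\<Sum>j\<in>{r..<p}. a j) \<le> (real p - real r) * (\<Sum>i<r. a i)"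
    using r by (simp add: of_nat_diff)
  have 2: "(\<Sum>i<p. a i) = (\<Sum>i<r. a i) + (\<Sum>j\<in>{r..<p}. a j)"
    using r by (metis atLeast0LessThan sum.atLeastLessThan_concat zero_le)
  show ?thesis using 1 2 by (simp add: algebra_simps)
qed

lemma sum_power2_rectangular_diagonal:
  assumes S: "(S :: real mat) \<in> carrier_mat m n" and off: "\<forall>i<m. \<forall>j<n. i \<noteq> j \<longrightarrow> S $$ (i,j) = 0"
    and k: "k \<le> m"
  shows "(\<Sum>i<k. \<Sum>j<n. S $$ (i,j) * S $$ (i,j)) = (\<Sum>i<min k n. (S $$ (i,i))\<^sup>2)"
proof -
  have "(\<Sum>j<n. S $$ (i,j) * S $$ (i,j)) = (if i < n then (S $$ (i,i))\<^sup>2 else 0)" if i: "i < k" for i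
  proof -
    have "(\<Sum>j<n. S $$ (i,j) * S $$ (i,j)) = (\<Sum>j<n. if j = i then (S $$ (i,i))\<^sup>2 else 0)"
      using off i k by (intro sum.cong) (auto simp: power2_eq_square)
    also have "\<dots> = (if i < n then (S $$ (i,i))\<^sup>2 else 0)"
      by (simp add: sum.delta')
    finally show ?thesis .
  qed
  then have "(\<Sum>i<k. \<Sum>j<n. S $$ (i,j) * S $$ (i,j)) = (\<Sum>i<k. if i \<in> {..<n} then (S $$ (i,i))\<^sup>2 else 0)"
    by (intro sum.cong) auto
  also have "\<dots> = (\<Sum>i\<in>{..<k} \<inter> {..<n}. (S $$ (i,i))\<^sup>2)"
    by (simp add: sum.inter_restrict)
  also have "{..<k} \<inter> {..<n} = {..<min k n}" by auto
  finally show ?thesis .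
qed

lemma svd_frob_energy:
  assumes G: "G \<in> carrier_mat m n" and svd: "is_svd G U S V"
  shows "frob_inner G G = (\<Sum>i<min m n. (S $$ (i,i))\<^sup>2)"
proof -
  note D = is_svdD[OF svd G]
  have "frob_inner G G = frob_inner (U * (S * transpose_mat V)) (U * (S * transpose_mat V))"
    using D by (simp add: assoc_mult_mat[of U m m S n "transpose_mat V" n])
  also have "\<dots> = frob_inner (S * transpose_mat V) (S * transpose_mat V)"
    using D by (intro frob_inner_orthogonal_left) auto
  also have "\<dots> = frob_inner S S" using D by (intro frob_inner_orthogonal_right)
  also have "\<dots> = (\<Sum>i<min m n. (S $$ (i,i))\<^sup>2)"
    using sum_power2_rectangular_diagonal[OF D(3) D(6), of m] D(3) unfolding frob_inner_def by auto
  finally show ?thesis .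
qed

lemma svd_left_proj_energy:
  assumes G: "G \<in> carrier_mat m n" and svd: "is_svd G U S V" and r: "r \<le> min m n"
  shows "frob_inner (left_proj (first_cols r U) G) G = (\<Sum>i<r. (S $$ (i,i))\<^sup>2)"
proof -
  note D = is_svdD[OF svd G]
  define P where "P = first_cols r U"
  have P: "P \<in> carrier_mat m r" unfolding P_def using D(1) by (rule first_cols_carrier)
  define Z where "Z = transpose_mat P * U * S"
  have Z: "Z \<in> carrier_mat r n" unfolding Z_def using P D by auto
  have "transpose_mat P * G = Z * transpose_mat V"
    using P D unfolding Z_def by (simp add: assoc_mult_mat[of _ r m _ m _ n] assoc_mult_mat[of _ r m _ n _ n])
  moreover have "frob_inner (left_proj P G) G = frob_inner (transpose_mat P * G) (transpose_mat P * G)"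
    unfolding left_proj_def using P G by (intro frob_inner_mult_left) auto
  ultimately have "frob_inner (left_proj P G) G = frob_inner (Z * transpose_mat V) (Z * transpose_mat V)"
    by simp
  also have "\<dots> = frob_inner Z Z" using D Z by (intro frob_inner_orthogonal_right)
  also have "\<dots> = (\<Sum>i<r. \<Sum>j<n. S $$ (i,j) * S $$ (i,j))"
  proof -
    text \<open>\<open>Z\<close> consists of the first \<open>r\<close> rows of \<open>S\<close>.\<close>
    have "Z $$ (i,j) = S $$ (i,j)" if "i < r" "j < n" for i j
      using that r D(3) transpose_first_cols_mult[OF D(1) D(4), of r]
      by (simp add: Z_def P_def scalar_prod_def sum.delta if_distrib[of "\<lambda>c. c * _"] cong: if_cong)
    then show ?thesis using Z unfolding frob_inner_def by auto
  qed
  also have "\<dots> = (\<Sum>i<r. (S $$ (i,i))\<^sup>2)"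
    using sum_power2_rectangular_diagonal[OF D(3) D(6), of r] r by (simp add: min_absorb1)
  finally show ?thesis unfolding P_def .
qed

lemma svd_left_proj_energy_ge:
  assumes G: "G \<in> carrier_mat m n" and svd: "is_svd G U S V" and r: "r \<le> min m n"
  shows "real r / real (min m n) * frob_inner G G \<le> frob_inner (left_proj (first_cols r U) G) G"
proof -
  note D = is_svdD[OF svd G]
  text \<open>The retained energy consists of the \<open>r\<close> largest squared singular values.\<close>
  have "real r * (\<Sum>i<min m n. (S $$ (i,i))\<^sup>2) \<le> real (min m n) * (\<Sum>i<r. (S $$ (i,i))\<^sup>2)"
    using D(7,8) by (intro prefix_sum_ge_average[OF _ r] power_mono) auto
  then show ?thesis
    unfolding svd_frob_energy[OF G svd] svd_left_proj_energy[OF G svd r]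
    using r by (cases "min m n = 0") (auto simp: field_simps)
qed

lemma is_svd_transpose:
  assumes G: "G \<in> carrier_mat m n" and svd: "is_svd G U S V"
  shows "is_svd (transpose_mat G) V (transpose_mat S) U"
proof -
  note D = is_svdD[OF svd G]
  have "transpose_mat G = V * transpose_mat S * transpose_mat U"
    using D by (simp add: transpose_mult[of _ m n _ n] transpose_mult[of _ m m _ n]
        assoc_mult_mat[of V n n "transpose_mat S" m "transpose_mat U" m])
  then show ?thesis
    unfolding is_svd_def Let_def using G D by (auto simp: min.commute)
qed

lemma svd_right_proj_energy_ge:
  assumes G: "G \<in> carrier_mat m n" and svd: "is_svd G U S V" and r: "r \<le> min m n"
  shows "real r / real (min m n) * frob_inner G G \<le> frob_inner (right_proj (first_cols r V) G) G"
proof -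
  define Q where "Q = first_cols r V"
  have Q: "Q \<in> carrier_mat n r" unfolding Q_def using is_svdD(2)[OF svd G] by (rule first_cols_carrier)
  have "transpose_mat (G * Q * transpose_mat Q) = transpose_mat (transpose_mat Q) * transpose_mat (G * Q)"
    using G Q by (intro transpose_mult) auto
  also have "transpose_mat (G * Q) = transpose_mat Q * transpose_mat G"
    using G Q by (intro transpose_mult) auto
  finally have "transpose_mat (right_proj Q G) = left_proj Q (transpose_mat G)"
    unfolding right_proj_def left_proj_def by simp
  then have "frob_inner (right_proj Q G) G = frob_inner (left_proj Q (transpose_mat G)) (transpose_mat G)"
    using G Q by (simp add: frob_inner_transpose[of "right_proj Q G" m n] right_proj_carrier)
  moreover have "frob_inner G G = frob_inner (transpose_mat G) (transpose_mat G)"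
    using G by (intro frob_inner_transpose) auto
  moreover have "transpose_mat G \<in> carrier_mat n m" using G by simp
  note transposed = svd_left_proj_energy_ge[OF this is_svd_transpose[OF G svd], of r]
  ultimately show ?thesis
    using transposed r unfolding Q_def by (simp add: min.commute)
qed

section \<open>Stacking matrix blocks into a parameter vector\<close>

lemma sum_Sigma_pair:
  assumes "finite A" "\<And>x. x \<in> A \<Longrightarrow> finite (B x)"
  shows "(\<Sum>x\<in>A. \<Sum>y\<in>B x. F (x,y)) = (\<Sum>p\<in>Sigma A B. F p)"
  using sum.Sigma[of A B "\<lambda>x y. F (x,y)"] assms by (simp add: case_prod_eta)

locale block_stacking =
  fixes NL :: nat and m n :: "nat \<Rightarrow> nat" and ix :: "nat \<Rightarrow> nat \<Rightarrow> nat \<Rightarrow> 'd::finite"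
  assumes stack_bij: "bij_betw (\<lambda>(l,i,j). ix l i j) {(l,i,j). l < NL \<and> i < m l \<and> j < n l} UNIV"
begin

abbreviation "entries \<equiv> {(l,i,j). l < NL \<and> i < m l \<and> j < n l}"

abbreviation "blk l v \<equiv> block ix (m l) (n l) l v"

definition entry_of :: "'d \<Rightarrow> nat \<times> nat \<times> nat" where
  "entry_of k = the_inv_into entries (\<lambda>(l,i,j). ix l i j) k"

definition stack :: "(nat \<Rightarrow> real mat) \<Rightarrow> real^'d" where
  "stack W = (\<chi> k. case entry_of k of (l,i,j) \<Rightarrow> W l $$ (i,j))"

lemma entry_of_ix: "l < NL \<Longrightarrow> i < m l \<Longrightarrow> j < n l \<Longrightarrow> entry_of (ix l i j) = (l,i,j)"
  unfolding entry_of_def using the_inv_into_f_f[of "\<lambda>(l,i,j). ix l i j" entries "(l,i,j)"] stack_bij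
  by (simp add: bij_betw_def)

lemma entry_of_in_entries: "entry_of k \<in> entries"
  unfolding entry_of_def using stack_bij by (intro the_inv_into_into) (auto simp: bij_betw_def)

lemma ix_entry_of: "(\<lambda>(l,i,j). ix l i j) (entry_of k) = k"
  unfolding entry_of_def using stack_bij by (intro f_the_inv_into_f) (auto simp: bij_betw_def)

lemma layers_nonempty: "0 < NL"
  using entry_of_in_entries[of undefined] by auto

lemma blk_carrier: "blk l v \<in> carrier_mat (m l) (n l)"
  unfolding block_def by simp

lemma blk_stack: "l < NL \<Longrightarrow> W l \<in> carrier_mat (m l) (n l) \<Longrightarrow> blk l (stack W) = W l"
  by (rule eq_matI) (auto simp: block_def stack_def entry_of_ix)

lemma vec_eq_if_blk_eq:
  assumes "\<And>l. l < NL \<Longrightarrow> blk l u = blk l v"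
  shows "u = v"
proof -
  have "u $ k = v $ k" for k
  proof -
    obtain l i j where lij: "entry_of k = (l,i,j)" by (cases "entry_of k") auto
    then have ranges: "l < NL" "i < m l" "j < n l" using entry_of_in_entries[of k] by auto
    have "u $ ix l i j = blk l u $$ (i,j)" "v $ ix l i j = blk l v $$ (i,j)"
      using ranges by (simp_all add: block_def)
    moreover have "k = ix l i j" using ix_entry_of[of k] lij by simp
    ultimately show ?thesis using assms ranges by simp
  qed
  then show ?thesis by (simp add: Finite_Cartesian_Product.vec_eq_iff)
qed

lemma stack_cong:
  assumes "\<And>l. l < NL \<Longrightarrow> W l = W' l"
  shows "stack W = stack W'"
proof -
  have "(case entry_of k of (l,i,j) \<Rightarrow> W l $$ (i,j)) = (case entry_of k of (l,i,j) \<Rightarrow> W' l $$ (i,j))" for k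
    using entry_of_in_entries[of k] assms by (cases "entry_of k") auto
  then show ?thesis unfolding stack_def by simp
qed

lemma inner_eq_sum_frob_inner: "inner u v = (\<Sum>l<NL. frob_inner (blk l u) (blk l v))"
proof -
  have "inner u v = (\<Sum>k\<in>UNIV. u $ k * v $ k)" by (simp add: inner_vec_def)
  also have "\<dots> = (\<Sum>p\<in>entries. u $ (case p of (l,i,j) \<Rightarrow> ix l i j) * v $ (case p of (l,i,j) \<Rightarrow> ix l i j))"
    using sum.reindex_bij_betw[OF stack_bij, of "\<lambda>k. u $ k * v $ k"] by simp
  also have "entries = Sigma {..<NL} (\<lambda>l. Sigma {..<m l} (\<lambda>i. {..<n l}))" by auto
  also have "(\<Sum>p\<in>\<dots>. u $ (case p of (l,i,j) \<Rightarrow> ix l i j) * v $ (case p of (l,i,j) \<Rightarrow> ix l i j))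
      = (\<Sum>l<NL. \<Sum>i<m l. \<Sum>j<n l. u $ ix l i j * v $ ix l i j)"
    by (simp add: sum_Sigma_pair[symmetric] sum_Sigma_pair[of "{..<m _}" "\<lambda>i. {..<n _}", symmetric])
  finally show ?thesis unfolding frob_inner_def block_def by simp
qed

lemma blk_linear: "blk l (a *\<^sub>R u + b *\<^sub>R v) = a \<cdot>\<^sub>m blk l u + b \<cdot>\<^sub>m blk l v"
  by (rule eq_matI) (auto simp: block_def)

lemma blk_diff_scaleR: "blk l (u - c *\<^sub>R v) = blk l u - c \<cdot>\<^sub>m blk l v"
  by (rule eq_matI) (auto simp: block_def)

lemma blk_scaleR: "blk l (c *\<^sub>R v) = c \<cdot>\<^sub>m blk l v"
  by (rule eq_matI) (auto simp: block_def)

end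

section \<open>GaLore as projected momentum descent\<close>

locale galore_iteration = block_stacking NL m n ix
  for NL :: nat and m n :: "nat \<Rightarrow> nat" and ix :: "nat \<Rightarrow> nat \<Rightarrow> nat \<Rightarrow> 'd::finite" +
  fixes grad :: "real^'d \<Rightarrow> real^'d" and r :: "nat \<Rightarrow> nat" and \<beta> \<eta> :: real and \<tau> :: nat
    and x :: "nat \<Rightarrow> real^'d" and P Q M G :: "nat \<Rightarrow> nat \<Rightarrow> real mat"
  assumes rank: "\<And>l. l < NL \<Longrightarrow> r l < min (m l) (n l)"
    and G_eq: "\<And>t l. G t l = blk l (grad (x t))"
    and factors_svd: "\<And>t l. l < NL \<Longrightarrow> t mod \<tau> = 0 \<Longrightarrow>
         \<exists>U S V. is_svd (G t l) U S V \<and> P t l = first_cols (r l) U \<and> Q t l = first_cols (r l) V"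
    and factors_keep: "\<And>t l. l < NL \<Longrightarrow> t mod \<tau> \<noteq> 0 \<Longrightarrow> P t l = P (t - 1) l \<and> Q t l = Q (t - 1) l"
    and M_0_left: "\<And>l. l < NL \<Longrightarrow> m l \<le> n l \<Longrightarrow> M 0 l = \<beta> \<cdot>\<^sub>m (transpose_mat (P 0 l) * G 0 l)"
    and M_Suc_left: "\<And>t l. l < NL \<Longrightarrow> m l \<le> n l \<Longrightarrow>
         M (Suc t) l = (1 - \<beta>) \<cdot>\<^sub>m (transpose_mat (P (Suc t) l) * P t l * M t l)
                       + \<beta> \<cdot>\<^sub>m (transpose_mat (P (Suc t) l) * G (Suc t) l)"
    and x_Suc_left: "\<And>t l. l < NL \<Longrightarrow> m l \<le> n l \<Longrightarrow>
         blk l (x (Suc t)) = blk l (x t) - \<eta> \<cdot>\<^sub>m (P t l * M t l)"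
    and M_0_right: "\<And>l. l < NL \<Longrightarrow> m l > n l \<Longrightarrow> M 0 l = \<beta> \<cdot>\<^sub>m (G 0 l * Q 0 l)"
    and M_Suc_right: "\<And>t l. l < NL \<Longrightarrow> m l > n l \<Longrightarrow>
         M (Suc t) l = (1 - \<beta>) \<cdot>\<^sub>m (M t l * transpose_mat (Q t l) * Q (Suc t) l)
                       + \<beta> \<cdot>\<^sub>m (G (Suc t) l * Q (Suc t) l)"
    and x_Suc_right: "\<And>t l. l < NL \<Longrightarrow> m l > n l \<Longrightarrow>
         blk l (x (Suc t)) = blk l (x t) - \<eta> \<cdot>\<^sub>m (M t l * transpose_mat (Q t l))"
begin

definition layer_proj :: "nat \<Rightarrow> nat \<Rightarrow> real mat \<Rightarrow> real mat" where
  "layer_proj t l X = (if m l \<le> n l then left_proj (P t l) X else right_proj (Q t l) X)"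

definition proj :: "nat \<Rightarrow> real^'d \<Rightarrow> real^'d" where
  "proj t v = stack (\<lambda>l. layer_proj t l (blk l v))"

definition update :: "nat \<Rightarrow> nat \<Rightarrow> real mat" where
  "update t l = (if m l \<le> n l then P t l * M t l else M t l * transpose_mat (Q t l))"

definition mom :: "nat \<Rightarrow> real^'d" where
  "mom t = stack (update t)"

lemma G_carrier: "G t l \<in> carrier_mat (m l) (n l)"
  unfolding G_eq by (rule blk_carrier)

lemma factors_orthonormal:
  assumes l: "l < NL"
  shows "P t l \<in> carrier_mat (m l) (r l) \<and> transpose_mat (P t l) * P t l = 1\<^sub>m (r l) \<and>
         Q t l \<in> carrier_mat (n l) (r l) \<and> transpose_mat (Q t l) * Q t l = 1\<^sub>m (r l)"
proof (induction t rule: less_induct)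
  case (less t)
  show ?case
  proof (cases "t mod \<tau> = 0")
    case True
    obtain U S V where svd: "is_svd (G t l) U S V"
      and "P t l = first_cols (r l) U" "Q t l = first_cols (r l) V"
      using factors_svd[OF l True] by blast
    moreover note D = is_svdD[OF svd G_carrier]
    moreover have "r l \<le> m l" "r l \<le> n l" using rank[OF l] by auto
    ultimately show ?thesis by (simp add: first_cols_carrier first_cols_orthonormal)
  next
    case False
    then have "0 < t" by (cases t) auto
    then show ?thesis using less.IH[of "t - 1"] factors_keep[OF l False] by simp
  qed
qed

lemma P_carrier: "l < NL \<Longrightarrow> P t l \<in> carrier_mat (m l) (r l)"
  using factors_orthonormal by blast

lemma P_orthonormal: "l < NL \<Longrightarrow> transpose_mat (P t l) * P t l = 1\<^sub>m (r l)"
  using factors_orthonormal by blast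

lemma Q_carrier: "l < NL \<Longrightarrow> Q t l \<in> carrier_mat (n l) (r l)"
  using factors_orthonormal by blast

lemma Q_orthonormal: "l < NL \<Longrightarrow> transpose_mat (Q t l) * Q t l = 1\<^sub>m (r l)"
  using factors_orthonormal by blast

lemma M_carrier:
  assumes l: "l < NL"
  shows "M t l \<in> (if m l \<le> n l then carrier_mat (r l) (n l) else carrier_mat (m l) (r l))"
proof (induction t)
  case 0
  show ?case
    using M_0_left[OF l] M_0_right[OF l] P_carrier[OF l, of 0] Q_carrier[OF l, of 0] G_carrier[of 0 l] by auto
next
  case (Suc t)
  show ?case using M_Suc_left[OF l, of t] M_Suc_right[OF l, of t] P_carrier[OF l, of t] P_carrier[OF l, of "Suc t"]
      Q_carrier[OF l, of t] Q_carrier[OF l, of "Suc t"] G_carrier[of "Suc t" l] Suc by (auto split: if_splits)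
qed

lemma layer_proj_carrier:
  assumes l: "l < NL" and X: "X \<in> carrier_mat (m l) (n l)"
  shows "layer_proj t l X \<in> carrier_mat (m l) (n l)"
  using left_proj_carrier[OF P_carrier[OF l] X] right_proj_carrier[OF Q_carrier[OF l] X]
  unfolding layer_proj_def by simp

lemma update_carrier:
  assumes l: "l < NL"
  shows "update t l \<in> carrier_mat (m l) (n l)"
  using P_carrier[OF l, of t] Q_carrier[OF l, of t] M_carrier[OF l, of t] unfolding update_def by auto

lemma blk_proj: "l < NL \<Longrightarrow> blk l (proj t v) = layer_proj t l (blk l v)"
  unfolding proj_def by (intro blk_stack layer_proj_carrier blk_carrier)

lemma blk_mom: "l < NL \<Longrightarrow> blk l (mom t) = update t l"
  unfolding mom_def by (intro blk_stack update_carrier)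

lemma proj_adjoint: "inner (proj t u) v = inner u (proj t v)"
proof -
  have "frob_inner (layer_proj t l X) Y = frob_inner X (layer_proj t l Y)"
    if "l < NL" "X \<in> carrier_mat (m l) (n l)" "Y \<in> carrier_mat (m l) (n l)" for l X Y
    using left_proj_adjoint[OF P_carrier[OF that(1)] that(2,3)] right_proj_adjoint[OF Q_carrier[OF that(1)] that(2,3)]
    unfolding layer_proj_def by simp
  then show ?thesis unfolding inner_eq_sum_frob_inner by (simp add: blk_proj blk_carrier)
qed

lemma proj_idem: "proj t (proj t v) = proj t v"
proof -
  have "layer_proj t l (layer_proj t l X) = layer_proj t l X"
    if "l < NL" "X \<in> carrier_mat (m l) (n l)" for l X
    using left_proj_idem[OF P_carrier[OF that(1)] P_orthonormal[OF that(1)] that(2)]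
      right_proj_idem[OF Q_carrier[OF that(1)] Q_orthonormal[OF that(1)] that(2)]
    unfolding layer_proj_def by simp
  then show ?thesis by (intro vec_eq_if_blk_eq) (simp add: blk_proj blk_carrier layer_proj_carrier)
qed

lemma layer_proj_linear:
  assumes l: "l < NL" and X: "X \<in> carrier_mat (m l) (n l)" and Y: "Y \<in> carrier_mat (m l) (n l)"
  shows "layer_proj t l (a \<cdot>\<^sub>m X + b \<cdot>\<^sub>m Y) = a \<cdot>\<^sub>m layer_proj t l X + b \<cdot>\<^sub>m layer_proj t l Y"
  using left_proj_linear[OF P_carrier[OF l] X Y] right_proj_linear[OF Q_carrier[OF l] X Y]
  unfolding layer_proj_def by simp

lemma proj_linear: "proj t (a *\<^sub>R u + b *\<^sub>R v) = a *\<^sub>R proj t u + b *\<^sub>R proj t v"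
  by (rule vec_eq_if_blk_eq) (simp add: blk_proj blk_linear layer_proj_linear blk_carrier)

lemma proj_keep: "Suc t mod \<tau> \<noteq> 0 \<Longrightarrow> proj (Suc t) = proj t"
  unfolding proj_def layer_proj_def using factors_keep by (auto intro!: stack_cong)

lemma norm_proj_grad_power2_ge:
  assumes t: "t mod \<tau> = 0" and \<delta>: "\<And>l. l < NL \<Longrightarrow> \<delta> \<le> real (r l) / real (min (m l) (n l))"
  shows "\<delta> * (norm (grad (x t)))\<^sup>2 \<le> (norm (proj t (grad (x t))))\<^sup>2"
proof -
  have layer: "\<delta> * frob_inner (G t l) (G t l) \<le> frob_inner (layer_proj t l (G t l)) (G t l)" if l: "l < NL" for l
  proof -
    obtain U S V where svd: "is_svd (G t l) U S V"
      and "P t l = first_cols (r l) U" "Q t l = first_cols (r l) V" using factors_svd[OF l t] by blast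
    moreover have "r l \<le> min (m l) (n l)" using rank[OF l] by simp
    moreover have "\<delta> * frob_inner (G t l) (G t l) \<le> real (r l) / real (min (m l) (n l)) * frob_inner (G t l) (G t l)"
      using \<delta>[OF l] frob_inner_self_nonneg by (intro mult_right_mono)
    ultimately show ?thesis
      using svd_left_proj_energy_ge[OF G_carrier svd] svd_right_proj_energy_ge[OF G_carrier svd]
      unfolding layer_proj_def by (auto intro: order_trans)
  qed
  have "(norm (proj t (grad (x t))))\<^sup>2 = inner (proj t (proj t (grad (x t)))) (grad (x t))"
    by (simp add: power2_norm_eq_inner proj_adjoint)
  also have "\<dots> = (\<Sum>l<NL. frob_inner (layer_proj t l (G t l)) (G t l))"
    by (simp add: proj_idem inner_eq_sum_frob_inner blk_proj G_eq)
  finally have "(norm (proj t (grad (x t))))\<^sup>2 = (\<Sum>l<NL. frob_inner (layer_proj t l (G t l)) (G t l))" .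
  moreover have "\<delta> * (norm (grad (x t)))\<^sup>2 = (\<Sum>l<NL. \<delta> * frob_inner (G t l) (G t l))"
    by (simp add: power2_norm_eq_inner inner_eq_sum_frob_inner G_eq sum_distrib_left)
  moreover have "(\<Sum>l<NL. \<delta> * frob_inner (G t l) (G t l)) \<le> (\<Sum>l<NL. frob_inner (layer_proj t l (G t l)) (G t l))"
    by (intro sum_mono layer) simp
  ultimately show ?thesis by simp
qed

lemma update_0: "l < NL \<Longrightarrow> update 0 l = layer_proj 0 l (\<beta> \<cdot>\<^sub>m G 0 l)"
  using P_carrier[of l 0] Q_carrier[of l 0] G_carrier[of 0 l] M_0_left M_0_right
  unfolding update_def layer_proj_def by (auto simp: left_proj_smult right_proj_smult)

lemma update_Suc:
  assumes l: "l < NL"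
  shows "update (Suc t) l = layer_proj (Suc t) l ((1 - \<beta>) \<cdot>\<^sub>m update t l + \<beta> \<cdot>\<^sub>m G (Suc t) l)"
proof (cases "m l \<le> n l")
  case True
  then have M: "M t l \<in> carrier_mat (r l) (n l)" using M_carrier[OF l, of t] by simp
  have "P (Suc t) l * M (Suc t) l = (1 - \<beta>) \<cdot>\<^sub>m left_proj (P (Suc t) l) (P t l * M t l) + \<beta> \<cdot>\<^sub>m left_proj (P (Suc t) l) (G (Suc t) l)"
    unfolding M_Suc_left[OF l True] by (rule left_proj_momentum_update[OF P_carrier[OF l] P_carrier[OF l] M G_carrier])
  also have "\<dots> = left_proj (P (Suc t) l) ((1 - \<beta>) \<cdot>\<^sub>m (P t l * M t l) + \<beta> \<cdot>\<^sub>m G (Suc t) l)"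
    using P_carrier[OF l, of t] M by (intro left_proj_linear[OF P_carrier[OF l] _ G_carrier, symmetric]) auto
  finally show ?thesis using True unfolding update_def layer_proj_def by simp
next
  case False
  then have M: "M t l \<in> carrier_mat (m l) (r l)" using M_carrier[OF l, of t] by simp
  from False have "n l < m l" by simp
  have "M (Suc t) l * transpose_mat (Q (Suc t) l) = (1 - \<beta>) \<cdot>\<^sub>m right_proj (Q (Suc t) l) (M t l * transpose_mat (Q t l))
      + \<beta> \<cdot>\<^sub>m right_proj (Q (Suc t) l) (G (Suc t) l)"
    unfolding M_Suc_right[OF l \<open>n l < m l\<close>]
    by (rule right_proj_momentum_update[OF Q_carrier[OF l] Q_carrier[OF l] M G_carrier])
  also have "\<dots> = right_proj (Q (Suc t) l) ((1 - \<beta>) \<cdot>\<^sub>m (M t l * transpose_mat (Q t l)) + \<beta> \<cdot>\<^sub>m G (Suc t) l)"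
    using Q_carrier[OF l, of t] M by (intro right_proj_linear[OF Q_carrier[OF l] _ G_carrier, symmetric]) auto
  finally show ?thesis using False unfolding update_def layer_proj_def by simp
qed

lemma mom_0: "mom 0 = proj 0 (\<beta> *\<^sub>R grad (x 0))"
  unfolding mom_def proj_def by (intro stack_cong) (simp add: update_0 blk_scaleR G_eq)

lemma mom_Suc: "mom (Suc t) = proj (Suc t) ((1 - \<beta>) *\<^sub>R mom t + \<beta> *\<^sub>R grad (x (Suc t)))"
  unfolding mom_def[of "Suc t"] proj_def by (intro stack_cong) (simp add: update_Suc blk_linear blk_mom G_eq)

lemma x_Suc: "x (Suc t) = x t - \<eta> *\<^sub>R mom t"
proof (rule vec_eq_if_blk_eq)
  fix l assume l: "l < NL"
  have "blk l (x (Suc t)) = blk l (x t) - \<eta> \<cdot>\<^sub>m update t l"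
    using x_Suc_left[OF l] x_Suc_right[OF l] unfolding update_def by (cases "m l \<le> n l") auto
  then show "blk l (x (Suc t)) = blk l (x t - \<eta> *\<^sub>R mom t)" by (simp add: blk_diff_scaleR blk_mom[OF l])
qed

lemma galore_projected_momentum_descent:
  assumes "\<And>y. (f has_derivative (\<lambda>h. grad y \<bullet> h)) (at y)"
    and "\<And>y z. norm (grad y - grad z) \<le> L * norm (y - z)" and "0 \<le> L"
    and "0 < \<beta>" "\<beta> \<le> 1" "1 \<le> \<tau>" "0 < \<delta>" "\<delta> \<le> 1" "0 < \<eta>"
    and "\<And>l. l < NL \<Longrightarrow> \<delta> \<le> real (r l) / real (min (m l) (n l))"
  shows "projected_momentum_descent f grad L proj mom x \<beta> \<eta> \<delta> \<tau>"
  using assms by unfold_locales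
    (simp_all add: proj_adjoint proj_idem proj_linear proj_keep norm_proj_grad_power2_ge mom_0 mom_Suc x_Suc)

end

lemma galore_step_size_conditions:
  fixes L \<beta> \<eta> \<delta> :: real and \<tau> :: nat
  assumes \<beta>: "0 < \<beta>" and \<tau>: "1 \<le> \<tau>" "64 / (3 * \<beta> * \<delta>) \<le> real \<tau>" and \<eta>: "0 < \<eta>"
    and \<eta>1: "\<eta> \<le> 1 / (4 * L)" and \<eta>2: "\<eta> \<le> sqrt (3 * \<delta> * \<beta>\<^sup>2 / (80 * L\<^sup>2))"
    and \<eta>3: "\<eta> \<le> sqrt (3 * \<delta> / (80 * (real \<tau>)\<^sup>2 * L\<^sup>2))"
  shows "0 < L" "0 < \<delta>" "L * \<eta> \<le> 1/4" "L\<^sup>2 * \<eta>\<^sup>2 \<le> 3 * \<delta> * \<beta>\<^sup>2 / 80"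
    "L\<^sup>2 * \<eta>\<^sup>2 * (real \<tau>)\<^sup>2 \<le> 3 * \<delta> / 80" "64/3 \<le> real \<tau> * \<beta> * \<delta>"
proof -
  text \<open>\<open>L\<close> and \<open>\<delta>\<close> are not assumed positive: otherwise \<open>1 / (4 * L) \<le> 0\<close>, resp. the radicand is
    \<open>\<le> 0\<close> and \<open>sqrt\<close> returns \<open>0\<close>, contradicting \<open>0 < \<eta>\<close>.\<close>
  have sq: "\<eta>\<^sup>2 \<le> y" if "\<eta> \<le> sqrt y" for y
  proof -
    have "0 < y" using that \<eta> by (metis not_le order_less_le_trans real_sqrt_le_0_iff)
    then show ?thesis using that \<eta> by (metis less_eq_real_def power_mono real_sqrt_pow2)
  qed
  show L: "0 < L"
  proof (rule ccontr)
    assume "\<not> 0 < L"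
    then have "1 / (4 * L) \<le> 0" by (simp add: divide_nonpos_nonneg)
    then show False using \<eta>1 \<eta> by linarith
  qed
  show "L * \<eta> \<le> 1/4" using \<eta>1 L by (simp add: field_simps)
  have s2: "\<eta>\<^sup>2 \<le> 3 * \<delta> * \<beta>\<^sup>2 / (80 * L\<^sup>2)" using sq \<eta>2 by blast
  then show "L\<^sup>2 * \<eta>\<^sup>2 \<le> 3 * \<delta> * \<beta>\<^sup>2 / 80" using L by (simp add: field_simps)
  show \<delta>: "0 < \<delta>"
  proof -
    have "0 < 3 * \<delta> * \<beta>\<^sup>2 / (80 * L\<^sup>2)" using s2 \<eta> by (smt (verit) zero_less_power)
    then show ?thesis using L \<beta> by (simp add: zero_less_divide_iff zero_less_mult_iff)
  qed
  have "\<eta>\<^sup>2 \<le> 3 * \<delta> / (80 * (real \<tau>)\<^sup>2 * L\<^sup>2)" using sq \<eta>3 by blast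
  then show "L\<^sup>2 * \<eta>\<^sup>2 * (real \<tau>)\<^sup>2 \<le> 3 * \<delta> / 80" using L \<tau> by (simp add: field_simps)
  show "64/3 \<le> real \<tau> * \<beta> * \<delta>" using \<tau>(2) \<beta> \<delta> by (simp add: field_simps)
qed

theorem theoremB2:
  fixes NL :: nat and m n r :: "nat \<Rightarrow> nat"
    and ix :: "nat \<Rightarrow> nat \<Rightarrow> nat \<Rightarrow> 'd::finite"
    and f :: "real^'d \<Rightarrow> real" and grad :: "real^'d \<Rightarrow> real^'d"
    and L \<beta>1 \<eta> :: real and \<tau> K :: nat
    and x :: "nat \<Rightarrow> real^'d"
    and P Q M G :: "nat \<Rightarrow> nat \<Rightarrow> real mat"
    and \<delta> \<Delta> :: real
  assumes stack: "bij_betw (\<lambda>(l,i,j). ix l i j) {(l,i,j). l < NL \<and> i < m l \<and> j < n l} UNIV"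
    and grad: "\<And>y. (f has_derivative (\<lambda>h. grad y \<bullet> h)) (at y)"
    and A1: "bdd_below (range f)"
    and A2: "\<And>y z. norm (grad y - grad z) \<le> L * norm (y - z)"
    and rank: "\<And>l. l < NL \<Longrightarrow> r l < min (m l) (n l)"
    and G_def: "\<And>t l. G t l = block ix (m l) (n l) l (grad (x t))"
    and \<delta>_def: "\<delta> = Min ((\<lambda>l. real (r l) / real (min (m l) (n l))) ` {..<NL})"
    and \<Delta>_def: "\<Delta> = f (x 0) - (INF y. f y)"
    and proj_svd: "\<And>t l. l < NL \<Longrightarrow> t mod \<tau> = 0 \<Longrightarrow>
         \<exists>U S V. is_svd (G t l) U S V \<and> P t l = first_cols (r l) U \<and> Q t l = first_cols (r l) V"
    and proj_keep: "\<And>t l. l < NL \<Longrightarrow> t mod \<tau> \<noteq> 0 \<Longrightarrow>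
         P t l = P (t - 1) l \<and> Q t l = Q (t - 1) l"
    and mom0_le: "\<And>l. l < NL \<Longrightarrow> m l \<le> n l \<Longrightarrow>
         M 0 l = \<beta>1 \<cdot>\<^sub>m (transpose_mat (P 0 l) * G 0 l)"
    and mom_le: "\<And>t l. l < NL \<Longrightarrow> m l \<le> n l \<Longrightarrow>
         M (Suc t) l = (1 - \<beta>1) \<cdot>\<^sub>m (transpose_mat (P (Suc t) l) * P t l * M t l)
                       + \<beta>1 \<cdot>\<^sub>m (transpose_mat (P (Suc t) l) * G (Suc t) l)"
    and step_le: "\<And>t l. l < NL \<Longrightarrow> m l \<le> n l \<Longrightarrow>
         block ix (m l) (n l) l (x (Suc t)) = block ix (m l) (n l) l (x t) - \<eta> \<cdot>\<^sub>m (P t l * M t l)"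
    and mom0_gt: "\<And>l. l < NL \<Longrightarrow> m l > n l \<Longrightarrow>
         M 0 l = \<beta>1 \<cdot>\<^sub>m (G 0 l * Q 0 l)"
    and mom_gt: "\<And>t l. l < NL \<Longrightarrow> m l > n l \<Longrightarrow>
         M (Suc t) l = (1 - \<beta>1) \<cdot>\<^sub>m (M t l * transpose_mat (Q t l) * Q (Suc t) l)
                       + \<beta>1 \<cdot>\<^sub>m (G (Suc t) l * Q (Suc t) l)"
    and step_gt: "\<And>t l. l < NL \<Longrightarrow> m l > n l \<Longrightarrow>
         block ix (m l) (n l) l (x (Suc t)) = block ix (m l) (n l) l (x t) - \<eta> \<cdot>\<^sub>m (M t l * transpose_mat (Q t l))"
    and \<beta>1: "0 < \<beta>1" "\<beta>1 \<le> 1"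
    and \<tau>: "\<tau> \<ge> 1" "real \<tau> \<ge> 64 / (3 * \<beta>1 * \<delta>)"
    and \<eta>: "0 < \<eta>"
      "\<eta> \<le> Min {1 / (4 * L), sqrt (3 * \<delta> * \<beta>1^2 / (80 * L^2)),
                 sqrt (3 * \<delta> / (80 * real \<tau>^2 * L^2)), sqrt (3 * \<beta>1 / (16 * real \<tau> * L^2))}"
    and K: "K \<ge> 1"
  shows "(1 / real (K * \<tau>)) * (\<Sum>t<K * \<tau>. (norm (grad (x t)))^2)
           \<le> 16 * \<Delta> / (\<delta> * \<eta> * real (K * \<tau>))"
proof -
  interpret galore_iteration NL m n ix grad r \<beta>1 \<eta> \<tau> x P Q M G
    using stack rank G_def proj_svd proj_keep mom0_le mom_le step_le mom0_gt mom_gt step_gt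
    by unfold_locales auto
  have "\<eta> \<le> 1 / (4 * L)" "\<eta> \<le> sqrt (3 * \<delta> * \<beta>1\<^sup>2 / (80 * L\<^sup>2))"
    "\<eta> \<le> sqrt (3 * \<delta> / (80 * (real \<tau>)\<^sup>2 * L\<^sup>2))"
    using \<eta>(2) by simp_all
  note steps = galore_step_size_conditions[OF \<beta>1(1) \<tau> \<eta>(1) this]
  have \<delta>_le: "\<delta> \<le> real (r l) / real (min (m l) (n l))" if "l < NL" for l
    unfolding \<delta>_def using that by (intro Min_le) auto
  have "real (r 0) / real (min (m 0) (n 0)) \<le> 1" using rank[OF layers_nonempty] by simp
  with \<delta>_le[OF layers_nonempty] have "\<delta> \<le> 1" by linarith
  then interpret descent: projected_momentum_descent f grad L proj mom x \<beta>1 \<eta> \<delta> \<tau>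
    using steps \<delta>_le by (intro galore_projected_momentum_descent grad A2 \<beta>1 \<tau> \<eta>) auto
  have "\<delta> * \<eta> * (\<Sum>t<K * \<tau>. (norm (grad (x t)))\<^sup>2) \<le> 16 * (f (x 0) - f (x (K * \<tau>)))"
    using steps K by (intro descent.gradient_energy_bound) auto
  also have "\<dots> \<le> 16 * \<Delta>"
    unfolding \<Delta>_def using A1 by (simp add: cINF_lower)
  finally show ?thesis
    using steps K \<tau>(1) \<eta>(1) by (simp add: field_simps)
qed

end
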